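(* Let $V$ be a $2n$-dimensional real symplectic vector space, $g\ge2$, $h$ a hyperbolization of $\Gamma_g$, $\rho:\Gamma_g\to\mathrm{Sp}(V)$ a maximal representation and $\phi:S^1\to\mathcal L(V)$ a boundary map for $\rho$ as in the context. Let $\gamma\in\Gamma_g\setminus\{\mathrm{Id}\}$, let $\gamma^+,\gamma^-\in S^1$ be the attracting and repelling fixed points of $h(\gamma)$, and $L_\pm=\phi(\gamma^\pm)$. Then $$\mathrm{T}_\rho(\gamma)=\inf_{J'\in\mathcal Y_{L_-,L_+}}d_{\mathrm{Sp}}(J',\rho(\gamma)J').$$
   Context: $\Gamma_g$ is a closed oriented surface group of genus $g$; a hyperbolization is a discrete faithful cocompact $h:\Gamma_g\to\mathrm{PSL}(2,\mathbb R)$, giving an action of $\Gamma_g$ on $S^1=\partial\mathbb D$. $\mathcal X_{\mathrm{Sp}}=\{J\in\mathrm{GL}(V):J^2=-\mathrm{Id},\ \langle\cdot,J\cdot\rangle\text{ symmetric positive definite}\}$ with $\mathrm{Sp}(V)$ acting by conjugation; $d_{\mathrm{Sp}}(J_1,J_2)=|\log\|\mathrm{Id}\|_{J_1,J_2}|+|\log\|\mathrm{Id}\|_{J_2,J_1}|$ where $\|\mathrm{Id}\|_{J_1,J_2}$ is the operator norm of the identity from $(V,\langle\cdot,J_1\cdot\rangle^{1/2})$ to $(V,\langle\cdot,J_2\cdot\rangle^{1/2})$; $\mathrm{T}_\rho(\gamma)=\inf_{J\in\mathcal X_{\mathrm{Sp}}}d_{\mathrm{Sp}}(J,\rho(\gamma)J)$.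 $\mathcal L(V)$ is the space of Lagrangian subspaces; $L,L'$ are transverse if $L\cap L'=0$. For transverse $L_-,L_+$, $\mathcal Y_{L_-,L_+}=\{J\in\mathcal X_{\mathrm{Sp}}:J(L_\pm)=L_\mp\}$. Maximal representation: Toledo invariant equal to the Milnor–Wood bound $n(g-1)$. A boundary map for $\rho$ is a $\rho$-equivariant continuous map $\phi:S^1\to\mathcal L(V)$ sending distinct points to transverse Lagrangians (such a map exists for maximal $\rho$ by work of Burger–Iozzi–Labourie–Wienhard). *)

theory Defs
  imports "HOL-Analysis.Analysis" "HOL-Algebra.Group"
begin

section \<open>Closed oriented surface group of genus g, via its standard presentation\<close>

text \<open>Generators are indexed by j < 2g: a_i = c (2i), b_i = c (2i+1).
  A letter is (j, True) for c j and (j, False) for its inverse.\<close>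

type_synonym letter = "nat \<times> bool"

definition linv :: "letter \<Rightarrow> letter" where
  "linv l = (fst l, \<not> snd l)"

definition word_inv :: "letter list \<Rightarrow> letter list" where
  "word_inv w = rev (map linv w)"

definition surf_relator :: "nat \<Rightarrow> letter list" where
  "surf_relator g = concat (map (\<lambda>i. [(2*i, True), (2*i+1, True), (2*i, False), (2*i+1, False)]) [0..<g])"

definition word_in :: "nat \<Rightarrow> letter list \<Rightarrow> bool" where
  "word_in g w \<longleftrightarrow> (\<forall>l\<in>set w. fst l < 2*g)"

definition surf_ins :: "nat \<Rightarrow> letter list \<Rightarrow> letter list \<Rightarrow> bool" where
  "surf_ins g w w' \<longleftrightarrow> (\<exists>u v x. w = u @ v \<and> w' = u @ x @ v \<and>
      (x = surf_relator g \<or> x = word_inv (surf_relator g) \<or>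
       (\<exists>l. fst l < 2*g \<and> x = [l, linv l])))"

definition surf_equiv :: "nat \<Rightarrow> letter list \<Rightarrow> letter list \<Rightarrow> bool" where
  "surf_equiv g = (\<lambda>w w'. surf_ins g w w' \<or> surf_ins g w' w)\<^sup>*\<^sup>*"

definition eval_word :: "('g, 'm) monoid_scheme \<Rightarrow> (nat \<Rightarrow> 'g) \<Rightarrow> letter list \<Rightarrow> 'g" where
  "eval_word G c w = foldr (\<lambda>l x. (if snd l then c (fst l) else inv\<^bsub>G\<^esub> (c (fst l))) \<otimes>\<^bsub>G\<^esub> x) w \<one>\<^bsub>G\<^esub>"

text \<open>G with generators c is (isomorphic to) the surface group
  Gamma_g = < a_1,b_1,...,a_g,b_g | [a_1,b_1]...[a_g,b_g] >.\<close>
definition surface_group :: "('g, 'm) monoid_scheme \<Rightarrow> nat \<Rightarrow> (nat \<Rightarrow> 'g) \<Rightarrow> bool" where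
  "surface_group G g c \<longleftrightarrow> group G \<and> (\<forall>j<2*g. c j \<in> carrier G) \<and>
     carrier G = {eval_word G c w | w. word_in g w} \<and>
     (\<forall>w. word_in g w \<longrightarrow> (eval_word G c w = \<one>\<^bsub>G\<^esub> \<longleftrightarrow> surf_equiv g w []))"

section \<open>Hyperbolizations: PSL(2,R) = PSU(1,1) acting on the closed unit disk\<close>

definition mob :: "complex \<Rightarrow> complex \<Rightarrow> complex \<Rightarrow> complex" where
  "mob \<alpha> \<beta> z = (\<alpha> * z + \<beta>) / (cnj \<beta> * z + cnj \<alpha>)"

definition is_mob :: "complex \<Rightarrow> complex \<Rightarrow> (complex \<Rightarrow> complex) \<Rightarrow> bool" where
  "is_mob \<alpha> \<beta> f \<longleftrightarrow> (cmod \<alpha>)\<^sup>2 - (cmod \<beta>)\<^sup>2 = 1 \<and> (\<forall>z\<in>cball 0 1. f z = mob \<alpha> \<beta> z)"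

text \<open>h : G -> PSL(2,R), each element recorded by its action on the closed disk.\<close>
definition hyperbolization :: "('g, 'm) monoid_scheme \<Rightarrow> ('g \<Rightarrow> complex \<Rightarrow> complex) \<Rightarrow> bool" where
  "hyperbolization G h \<longleftrightarrow>
     (\<forall>x\<in>carrier G. \<exists>\<alpha> \<beta>. is_mob \<alpha> \<beta> (h x)) \<and>
     (\<forall>x\<in>carrier G. \<forall>y\<in>carrier G. \<forall>z\<in>cball 0 1. h (x \<otimes>\<^bsub>G\<^esub> y) z = h x (h y z)) \<and>
     \<comment> \<open>faithful\<close>
     (\<forall>x\<in>carrier G. (\<forall>z\<in>cball 0 1. h x z = z) \<longrightarrow> x = \<one>\<^bsub>G\<^esub>) \<and>
     \<comment> \<open>discrete image\<close>
     (\<exists>\<epsilon>>0. \<forall>x\<in>carrier G. \<forall>\<alpha> \<beta>. is_mob \<alpha> \<beta> (h x) \<and> cmod (\<alpha> - 1) < \<epsilon> \<and> cmod \<beta> < \<epsilon>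
         \<longrightarrow> (\<forall>z\<in>cball 0 1. h x z = z)) \<and>
     \<comment> \<open>cocompact\<close>
     (\<exists>K. compact K \<and> K \<subseteq> ball 0 1 \<and> (\<forall>z\<in>ball 0 1. \<exists>x\<in>carrier G. \<exists>k\<in>K. z = h x k))"

definition attracting_fp :: "(complex \<Rightarrow> complex) \<Rightarrow> complex \<Rightarrow> bool" where
  "attracting_fp f p \<longleftrightarrow> p \<in> sphere 0 1 \<and> f p = p \<and>
     (\<forall>z\<in>ball 0 1. (\<lambda>k. (f ^^ k) z) \<longlonglongrightarrow> p)"

definition symplectic_form :: "('v::euclidean_space \<Rightarrow> 'v \<Rightarrow> real) \<Rightarrow> bool" where
  "symplectic_form \<omega> \<longleftrightarrow> bilinear \<omega> \<and> (\<forall>u v. \<omega> u v = - \<omega> v u) \<and>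
     (\<forall>u. (\<forall>v. \<omega> u v = 0) \<longrightarrow> u = 0)"

definition Sp :: "('v::euclidean_space \<Rightarrow> 'v \<Rightarrow> real) \<Rightarrow> ('v \<Rightarrow> 'v) set" where
  "Sp \<omega> = {A. linear A \<and> (\<forall>u v. \<omega> (A u) (A v) = \<omega> u v)}"

definition lagrangian :: "('v::euclidean_space \<Rightarrow> 'v \<Rightarrow> real) \<Rightarrow> 'v set \<Rightarrow> bool" where
  "lagrangian \<omega> L \<longleftrightarrow> subspace L \<and> 2 * dim L = DIM('v) \<and> (\<forall>u\<in>L. \<forall>v\<in>L. \<omega> u v = 0)"

definition transverse :: "'v::euclidean_space set \<Rightarrow> 'v set \<Rightarrow> bool" where
  "transverse L L' \<longleftrightarrow> L \<inter> L' = {0}"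

definition XSp :: "('v::euclidean_space \<Rightarrow> 'v \<Rightarrow> real) \<Rightarrow> ('v \<Rightarrow> 'v) set" where
  "XSp \<omega> = {J. linear J \<and> (\<forall>v. J (J v) = - v) \<and> (\<forall>u v. \<omega> u (J v) = \<omega> v (J u)) \<and>
               (\<forall>v. v \<noteq> 0 \<longrightarrow> \<omega> v (J v) > 0)}"

definition Jnorm :: "('v::euclidean_space \<Rightarrow> 'v \<Rightarrow> real) \<Rightarrow> ('v \<Rightarrow> 'v) \<Rightarrow> 'v \<Rightarrow> real" where
  "Jnorm \<omega> J v = sqrt (\<omega> v (J v))"

definition id_opnorm :: "('v::euclidean_space \<Rightarrow> 'v \<Rightarrow> real) \<Rightarrow> ('v \<Rightarrow> 'v) \<Rightarrow> ('v \<Rightarrow> 'v) \<Rightarrow> real" where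
  "id_opnorm \<omega> J1 J2 = (SUP v\<in>-{0}. Jnorm \<omega> J2 v / Jnorm \<omega> J1 v)"

definition dSp :: "('v::euclidean_space \<Rightarrow> 'v \<Rightarrow> real) \<Rightarrow> ('v \<Rightarrow> 'v) \<Rightarrow> ('v \<Rightarrow> 'v) \<Rightarrow> real" where
  "dSp \<omega> J1 J2 = \<bar>ln (id_opnorm \<omega> J1 J2)\<bar> + \<bar>ln (id_opnorm \<omega> J2 J1)\<bar>"

definition sp_act :: "('v \<Rightarrow> 'v) \<Rightarrow> ('v \<Rightarrow> 'v) \<Rightarrow> ('v \<Rightarrow> 'v)" where
  "sp_act A J = A \<circ> J \<circ> Hilbert_Choice.inv A"

definition translength :: "('v::euclidean_space \<Rightarrow> 'v \<Rightarrow> real) \<Rightarrow> ('v \<Rightarrow> 'v) \<Rightarrow> real" where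
  "translength \<omega> A = (INF J\<in>XSp \<omega>. dSp \<omega> J (sp_act A J))"

definition YSp :: "('v::euclidean_space \<Rightarrow> 'v \<Rightarrow> real) \<Rightarrow> 'v set \<Rightarrow> 'v set \<Rightarrow> ('v \<Rightarrow> 'v) set" where
  "YSp \<omega> Lm Lp = {J \<in> XSp \<omega>. J ` Lp = Lm \<and> J ` Lm = Lp}"

definition sp_rep :: "('g, 'm) monoid_scheme \<Rightarrow> ('v::euclidean_space \<Rightarrow> 'v \<Rightarrow> real) \<Rightarrow> ('g \<Rightarrow> 'v \<Rightarrow> 'v) \<Rightarrow> bool" where
  "sp_rep G \<omega> \<rho> \<longleftrightarrow> (\<forall>x\<in>carrier G. \<rho> x \<in> Sp \<omega>) \<and>
     (\<forall>x\<in>carrier G. \<forall>y\<in>carrier G. \<rho> (x \<otimes>\<^bsub>G\<^esub> y) = \<rho> x \<circ> \<rho> y)"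

definition pos_index :: "('a::euclidean_space \<Rightarrow> real) \<Rightarrow> 'a set \<Rightarrow> nat" where
  "pos_index Q S = Sup {dim W | W. subspace W \<and> W \<subseteq> S \<and> (\<forall>x\<in>W. x \<noteq> 0 \<longrightarrow> Q x > 0)}"

definition maslov :: "('v::euclidean_space \<Rightarrow> 'v \<Rightarrow> real) \<Rightarrow> 'v set \<Rightarrow> 'v set \<Rightarrow> 'v set \<Rightarrow> int" where
  "maslov \<omega> L1 L2 L3 =
    (let Q = (\<lambda>(x1, x2, x3). \<omega> x1 x2 + \<omega> x2 x3 + \<omega> x3 x1);
         S = L1 \<times> L2 \<times> L3
     in int (pos_index Q S) - int (pos_index (\<lambda>x. - Q x) S))"

text \<open>Toledo invariant = evaluation of the Maslov (Kahler) cocycle on the fundamental cycle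
  sum_k [p_(k-1) | l_k] of the presentation (p_k = prefixes of the relator),
  normalized so that the Milnor-Wood inequality reads |T| <= n(g-1).\<close>
definition toledo :: "('g, 'm) monoid_scheme \<Rightarrow> nat \<Rightarrow> (nat \<Rightarrow> 'g) \<Rightarrow>
    ('v::euclidean_space \<Rightarrow> 'v \<Rightarrow> real) \<Rightarrow> ('g \<Rightarrow> 'v \<Rightarrow> 'v) \<Rightarrow> real" where
  "toledo G g c \<omega> \<rho> =
    (let L0 = (SOME L. lagrangian \<omega> L);
         p = (\<lambda>k. eval_word G c (take k (surf_relator g)))
     in - (1/4) * (\<Sum>k=1..4*g. real_of_int (maslov \<omega> L0 (\<rho> (p (k-1)) ` L0) (\<rho> (p k) ` L0))))"

definition maximal_rep :: "('g, 'm) monoid_scheme \<Rightarrow> nat \<Rightarrow> (nat \<Rightarrow> 'g) \<Rightarrow>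
    ('v::euclidean_space \<Rightarrow> 'v \<Rightarrow> real) \<Rightarrow> nat \<Rightarrow> ('g \<Rightarrow> 'v \<Rightarrow> 'v) \<Rightarrow> bool" where
  "maximal_rep G g c \<omega> n \<rho> \<longleftrightarrow> sp_rep G \<omega> \<rho> \<and> toledo G g c \<omega> \<rho> = real n * (real g - 1)"

definition oproj :: "'v::euclidean_space set \<Rightarrow> 'v \<Rightarrow> 'v" where
  "oproj L v = (THE w. w \<in> L \<and> (\<forall>u\<in>L. inner (v - w) u = 0))"

text \<open>Gap metric on subspaces (induces the standard topology on the Grassmannian).\<close>
definition gap :: "'v::euclidean_space set \<Rightarrow> 'v set \<Rightarrow> real" where
  "gap L L' = (SUP v\<in>cball 0 1. norm (oproj L v - oproj L' v))"

definition boundary_map :: "('g, 'm) monoid_scheme \<Rightarrow> ('g \<Rightarrow> complex \<Rightarrow> complex) \<Rightarrow>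
    ('v::euclidean_space \<Rightarrow> 'v \<Rightarrow> real) \<Rightarrow> ('g \<Rightarrow> 'v \<Rightarrow> 'v) \<Rightarrow> (complex \<Rightarrow> 'v set) \<Rightarrow> bool" where
  "boundary_map G h \<omega> \<rho> \<phi> \<longleftrightarrow>
     (\<forall>p\<in>sphere 0 1. lagrangian \<omega> (\<phi> p)) \<and>
     (\<forall>x\<in>carrier G. \<forall>p\<in>sphere 0 1. \<phi> (h x p) = \<rho> x ` \<phi> p) \<and>
     (\<forall>p\<in>sphere 0 1. \<forall>\<epsilon>>0. \<exists>\<delta>>0. \<forall>q\<in>sphere 0 1. dist q p < \<delta> \<longrightarrow> gap (\<phi> q) (\<phi> p) < \<epsilon>) \<and>
     (\<forall>p\<in>sphere 0 1. \<forall>q\<in>sphere 0 1. p \<noteq> q \<longrightarrow> transverse (\<phi> p) (\<phi> q))"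

end

(*
  Since h(gamma) is hyperbolic, its attracting and repelling fixed points differ: otherwise it
  would be parabolic, with arbitrarily small displacement in the disc, and discreteness together
  with cocompactness would give it a fixed point inside the disc. So the boundary map provides
  transverse Lagrangians L+ and L- preserved by A = rho(gamma).

  For such a pair, every compatible complex structure J has a counterpart Yproj J exchanging
  L+ and L-, with the same inner product omega(u, J u') on L+ and, necessarily, the dual one on
  L-. This retraction commutes with A and does not increase d_Sp, because the operator norm
  between two J-norms on L+ controls the one between the dual norms on L-. Hence
  d(Yproj J, A Yproj J) <= d(J, A J), so the infimum over X_Sp equals the one over Y.
*)
theory Submission
  imports Defs
begin

lemma le_of_square_le_mult:
  fixes a b :: real
  assumes "0 \<le> a" "0 \<le> b" "a\<^sup>2 \<le> a * b"
  shows "a \<le> b"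
  using assms mult_le_cancel_left_pos[of a a b] by (cases "a = 0") (auto simp: power2_eq_square)

section \<open>Compatible complex structures\<close>

locale symplectic_space =
  fixes \<omega> :: "'v::euclidean_space \<Rightarrow> 'v \<Rightarrow> real"
  assumes symplectic_form: "symplectic_form \<omega>"
begin

lemma bilinear: "bilinear \<omega>"
  and skew: "\<omega> u v = - \<omega> v u"
  and nondegenerate: "(\<And>v. \<omega> u v = 0) \<Longrightarrow> u = 0"
  using symplectic_form unfolding symplectic_form_def by blast+

lemmas form_simps [simp] =
  bilinear_ladd[OF bilinear] bilinear_radd[OF bilinear]
  bilinear_lmul[OF bilinear] bilinear_rmul[OF bilinear]
  bilinear_lneg[OF bilinear] bilinear_rneg[OF bilinear]
  bilinear_lsub[OF bilinear] bilinear_rsub[OF bilinear]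
  bilinear_lzero[OF bilinear] bilinear_rzero[OF bilinear]

lemma exists_nonzero: "\<exists>v::'v. v \<noteq> 0"
  using vector_choose_size[of 1] by force

lemma XSpD:
  assumes "J \<in> XSp \<omega>"
  shows "linear J" "\<And>v. J (J v) = - v" "\<And>u v. \<omega> u (J v) = \<omega> v (J u)"
    "\<And>v. v \<noteq> 0 \<Longrightarrow> \<omega> v (J v) > 0"
  using assms unfolding XSp_def by auto

lemma XSp_nonneg:
  assumes "J \<in> XSp \<omega>" shows "0 \<le> \<omega> v (J v)"
  using XSpD(4)[OF assms, of v] linear_0[OF XSpD(1)[OF assms]] by (cases "v = 0") auto

lemma XSp_preserves_form:
  assumes "J \<in> XSp \<omega>" shows "\<omega> (J a) (J b) = \<omega> a b"
  using XSpD(3)[OF assms, of b "J a"] XSpD(2)[OF assms, of a] skew[of b a] by simp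

lemma Jnorm_square:
  assumes "J \<in> XSp \<omega>" shows "(Jnorm \<omega> J v)\<^sup>2 = \<omega> v (J v)"
  unfolding Jnorm_def using XSp_nonneg[OF assms] by simp

lemma Jnorm_nonneg:
  assumes "J \<in> XSp \<omega>" shows "0 \<le> Jnorm \<omega> J v"
  unfolding Jnorm_def using XSp_nonneg[OF assms] by simp

lemma Jnorm_pos:
  assumes "J \<in> XSp \<omega>" "v \<noteq> 0" shows "0 < Jnorm \<omega> J v"
  unfolding Jnorm_def using XSpD(4)[OF assms] by simp

lemma Jnorm_scale:
  assumes "J \<in> XSp \<omega>" shows "Jnorm \<omega> J (c *\<^sub>R v) = \<bar>c\<bar> * Jnorm \<omega> J v"
  using XSpD(1)[OF assms]
  by (simp add: Jnorm_def linear_scale real_sqrt_mult mult.assoc[symmetric] flip: power2_eq_square)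

lemma Jnorm_minus:
  assumes "J \<in> XSp \<omega>" shows "Jnorm \<omega> J (- v) = Jnorm \<omega> J v"
  using Jnorm_scale[OF assms, of "-1" v] by simp

lemma Jnorm_J:
  assumes "J \<in> XSp \<omega>" shows "Jnorm \<omega> J (J v) = Jnorm \<omega> J v"
  unfolding Jnorm_def using XSp_preserves_form[OF assms, of v "J v"] by simp

lemma Jnorm_Cauchy_Schwarz:
  assumes J: "J \<in> XSp \<omega>"
  shows "\<omega> a (J b) \<le> Jnorm \<omega> J a * Jnorm \<omega> J b"
proof (cases "a = 0 \<or> b = 0")
  case True
  then show ?thesis using XSpD(1)[OF J] by (auto simp: Jnorm_def linear_0)
next
  case False
  define t where "t = Jnorm \<omega> J b / Jnorm \<omega> J a"
  have t: "t > 0" "t * Jnorm \<omega> J a = Jnorm \<omega> J b"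
    using False Jnorm_pos[OF J, of a] Jnorm_pos[OF J, of b] unfolding t_def by auto
  have "0 \<le> \<omega> (t *\<^sub>R a - b) (J (t *\<^sub>R a - b))"
    by (rule XSp_nonneg[OF J])
  also have "\<dots> = t\<^sup>2 * \<omega> a (J a) - 2 * t * \<omega> a (J b) + \<omega> b (J b)"
    using XSpD(1,3)[OF J]
    by (simp add: linear_diff linear_scale power2_eq_square algebra_simps)
  also have "\<dots> = 2 * t * (Jnorm \<omega> J a * Jnorm \<omega> J b - \<omega> a (J b))"
    by (simp add: Jnorm_square[OF J, symmetric] t(2)[symmetric] power2_eq_square algebra_simps)
  finally show ?thesis
    using t(1) by (simp add: zero_le_mult_iff)
qed

lemma abs_form_le_Jnorm:
  assumes J: "J \<in> XSp \<omega>"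
  shows "\<bar>\<omega> a b\<bar> \<le> Jnorm \<omega> J a * Jnorm \<omega> J b"
proof -
  have "\<omega> a (J (- J b)) = \<omega> a b" "\<omega> (- a) (J (- J b)) = - \<omega> a b"
    using XSpD(1,2)[OF J] by (simp_all add: linear_neg)
  moreover have "Jnorm \<omega> J (- J b) = Jnorm \<omega> J b"
    using Jnorm_minus[OF J] Jnorm_J[OF J] by simp
  ultimately show ?thesis
    using Jnorm_Cauchy_Schwarz[OF J, of a "- J b"] Jnorm_Cauchy_Schwarz[OF J, of "- a" "- J b"]
      Jnorm_minus[OF J, of a] unfolding abs_le_iff by auto
qed

lemma Jnorm_equivalent_norm:
  assumes J: "J \<in> XSp \<omega>"
  obtains c C where "0 < c" "0 < C"
    "\<And>v. c * norm v \<le> Jnorm \<omega> J v" "\<And>v. Jnorm \<omega> J v \<le> C * norm v"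
proof -
  have "continuous_on UNIV (\<lambda>v. \<omega> v (J v))"
    using XSpD(1)[OF J] linear_conv_bounded_linear
    by (intro bilinear_continuous_on_compose[OF continuous_on_id _ bilinear] linear_continuous_on)
      auto
  then have cont: "continuous_on (sphere 0 1) (Jnorm \<omega> J)"
    unfolding Jnorm_def
    by (intro continuous_on_real_sqrt) (rule continuous_on_subset, assumption, simp)
  obtain x where x: "x \<in> sphere 0 1" "\<And>y. y \<in> sphere 0 1 \<Longrightarrow> Jnorm \<omega> J x \<le> Jnorm \<omega> J y"
    using continuous_attains_inf[OF compact_sphere _ cont] by auto
  obtain z where z: "z \<in> sphere 0 1" "\<And>y. y \<in> sphere 0 1 \<Longrightarrow> Jnorm \<omega> J y \<le> Jnorm \<omega> J z"
    using continuous_attains_sup[OF compact_sphere _ cont] by (metis empty_iff x(1))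
  have "Jnorm \<omega> J x * norm v \<le> Jnorm \<omega> J v \<and> Jnorm \<omega> J v \<le> Jnorm \<omega> J z * norm v" for v
  proof (cases "v = 0")
    case True
    then show ?thesis using XSpD(1)[OF J] by (simp add: Jnorm_def linear_0)
  next
    case False
    then have "sgn v \<in> sphere 0 1" by (simp add: norm_sgn)
    moreover have "Jnorm \<omega> J v = norm v * Jnorm \<omega> J (sgn v)"
      using Jnorm_scale[OF J, of "norm v" "sgn v"] False by (simp add: sgn_div_norm)
    ultimately show ?thesis
      using x(2) z(2) by (simp add: mult_left_mono mult.commute[of _ "norm v"])
  qed
  moreover have "0 < Jnorm \<omega> J x" "0 < Jnorm \<omega> J z"
    using x(1) z(1) by (auto intro: Jnorm_pos[OF J])
  ultimately show ?thesis using that by blast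
qed

lemma Jnorm_le_id_opnorm:
  assumes J1: "J1 \<in> XSp \<omega>" and J2: "J2 \<in> XSp \<omega>"
  shows "Jnorm \<omega> J2 v \<le> id_opnorm \<omega> J1 J2 * Jnorm \<omega> J1 v"
proof (cases "v = 0")
  case True
  then show ?thesis using XSpD(1)[OF J2] by (simp add: Jnorm_def linear_0)
next
  case False
  obtain c1 where c1: "0 < c1" "\<And>v. c1 * norm v \<le> Jnorm \<omega> J1 v"
    using Jnorm_equivalent_norm[OF J1] by metis
  obtain C2 where C2: "\<And>v. Jnorm \<omega> J2 v \<le> C2 * norm v"
    using Jnorm_equivalent_norm[OF J2] by metis
  have "Jnorm \<omega> J2 w / Jnorm \<omega> J1 w \<le> C2 * norm w / (c1 * norm w)" if "w \<noteq> 0" for w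
    using that c1 C2[of w] Jnorm_nonneg[OF J2, of w] by (intro frac_le) auto
  then have "Jnorm \<omega> J2 w / Jnorm \<omega> J1 w \<le> C2 / c1" if "w \<noteq> 0" for w
    using that by simp
  then have "bdd_above ((\<lambda>w. Jnorm \<omega> J2 w / Jnorm \<omega> J1 w) ` (- {0}))"
    by (intro bdd_aboveI2) auto
  then have "Jnorm \<omega> J2 v / Jnorm \<omega> J1 v \<le> id_opnorm \<omega> J1 J2"
    unfolding id_opnorm_def using False by (intro cSUP_upper) auto
  then show ?thesis using Jnorm_pos[OF J1 False] by (simp add: divide_le_eq)
qed

lemma id_opnorm_le:
  assumes J1: "J1 \<in> XSp \<omega>" and bound: "\<And>v. Jnorm \<omega> J2 v \<le> M * Jnorm \<omega> J1 v"
  shows "id_opnorm \<omega> J1 J2 \<le> M"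
  unfolding id_opnorm_def
proof (rule cSUP_least)
  show "- {0::'v} \<noteq> {}" using exists_nonzero by auto
  fix v :: 'v assume "v \<in> - {0}"
  then show "Jnorm \<omega> J2 v / Jnorm \<omega> J1 v \<le> M"
    using Jnorm_pos[OF J1] bound[of v] by (simp add: divide_le_eq)
qed

text \<open>The \<open>J\<close>-norms are dual to each other via \<open>\<omega>\<close>, so a bound of \<open>J\<^sub>2\<close> by \<open>J\<^sub>1\<close> gives
  the same bound of \<open>J\<^sub>1\<close> by \<open>J\<^sub>2\<close>.\<close>

lemma Jnorm_le_swap:
  assumes J1: "J1 \<in> XSp \<omega>" and J2: "J2 \<in> XSp \<omega>"
    and bound: "\<And>v. Jnorm \<omega> J2 v \<le> M * Jnorm \<omega> J1 v"
  shows "Jnorm \<omega> J1 v \<le> M * Jnorm \<omega> J2 v"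
proof -
  obtain w :: 'v where "w \<noteq> 0" using exists_nonzero by blast
  then have "0 < M * Jnorm \<omega> J1 w"
    using Jnorm_pos[OF J2, of w] bound[of w] by linarith
  then have M: "0 \<le> M" using Jnorm_nonneg[OF J1, of w] by (simp add: zero_less_mult_iff)
  have "(Jnorm \<omega> J1 v)\<^sup>2 = \<omega> v (J1 v)" by (rule Jnorm_square[OF J1])
  also have "\<dots> \<le> Jnorm \<omega> J2 v * Jnorm \<omega> J2 (J1 v)"
    using abs_form_le_Jnorm[OF J2, of v "J1 v"] by linarith
  also have "\<dots> \<le> Jnorm \<omega> J2 v * (M * Jnorm \<omega> J1 v)"
    using bound[of "J1 v"] Jnorm_J[OF J1, of v] Jnorm_nonneg[OF J2, of v]
    by (simp add: mult_left_mono)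
  also have "\<dots> = Jnorm \<omega> J1 v * (M * Jnorm \<omega> J2 v)"
    by (simp only: ac_simps)
  finally have "(Jnorm \<omega> J1 v)\<^sup>2 \<le> Jnorm \<omega> J1 v * (M * Jnorm \<omega> J2 v)" .
  moreover have "0 \<le> M * Jnorm \<omega> J2 v"
    using M Jnorm_nonneg[OF J2, of v] by simp
  ultimately show ?thesis
    using le_of_square_le_mult[OF Jnorm_nonneg[OF J1]] by blast
qed

lemma id_opnorm_commute:
  assumes J1: "J1 \<in> XSp \<omega>" and J2: "J2 \<in> XSp \<omega>"
  shows "id_opnorm \<omega> J1 J2 = id_opnorm \<omega> J2 J1"
  using id_opnorm_le[OF J2 Jnorm_le_swap[OF J1 J2 Jnorm_le_id_opnorm[OF J1 J2]]]
    id_opnorm_le[OF J1 Jnorm_le_swap[OF J2 J1 Jnorm_le_id_opnorm[OF J2 J1]]]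
  by (rule antisym[rotated])

lemma id_opnorm_ge_1:
  assumes J1: "J1 \<in> XSp \<omega>" and J2: "J2 \<in> XSp \<omega>"
  shows "1 \<le> id_opnorm \<omega> J1 J2"
proof -
  define M where "M = id_opnorm \<omega> J1 J2"
  obtain v :: 'v where "v \<noteq> 0" using exists_nonzero by blast
  then have pos: "0 < Jnorm \<omega> J1 v" "0 < Jnorm \<omega> J2 v"
    using Jnorm_pos J1 J2 by auto
  have le: "Jnorm \<omega> J2 v \<le> M * Jnorm \<omega> J1 v" "Jnorm \<omega> J1 v \<le> M * Jnorm \<omega> J2 v"
    using Jnorm_le_id_opnorm[OF J1 J2] Jnorm_le_id_opnorm[OF J2 J1] id_opnorm_commute[OF J1 J2]
    unfolding M_def by auto
  then have "0 < M * Jnorm \<omega> J1 v"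
    using pos(2) by linarith
  then have "0 < M"
    using pos(1) by (simp add: zero_less_mult_iff)
  then have "Jnorm \<omega> J1 v \<le> M * (M * Jnorm \<omega> J1 v)"
    using le(2) mult_left_mono[OF le(1), of M] by linarith
  then have "1 * Jnorm \<omega> J1 v \<le> M\<^sup>2 * Jnorm \<omega> J1 v"
    by (simp add: power2_eq_square mult.assoc)
  then have "1\<^sup>2 \<le> M\<^sup>2"
    using pos by (simp only: mult_le_cancel_right_pos power_one)
  then show ?thesis
    unfolding M_def[symmetric] using \<open>0 < M\<close> by (metis power2_le_imp_le less_imp_le)
qed

lemma dSp_eq:
  assumes "J1 \<in> XSp \<omega>" "J2 \<in> XSp \<omega>"
  shows "dSp \<omega> J1 J2 = 2 * ln (id_opnorm \<omega> J1 J2)"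
  using id_opnorm_commute[OF assms] id_opnorm_ge_1[OF assms] unfolding dSp_def by simp

lemma dSp_le:
  assumes "J1 \<in> XSp \<omega>" "J2 \<in> XSp \<omega>" and "\<And>v. Jnorm \<omega> J2 v \<le> M * Jnorm \<omega> J1 v"
  shows "dSp \<omega> J1 J2 \<le> 2 * ln M"
  using id_opnorm_le[OF assms(1,3)] id_opnorm_ge_1[OF assms(1,2)] dSp_eq[OF assms(1,2)] by simp

lemma SpD:
  assumes "A \<in> Sp \<omega>" shows "linear A" "\<And>u v. \<omega> (A u) (A v) = \<omega> u v"
  using assms unfolding Sp_def by auto

lemma Sp_bij:
  assumes A: "A \<in> Sp \<omega>" shows "bij A"
proof -
  have "inj A"
    unfolding linear_injective_0[OF SpD(1)[OF A]]
    using SpD(2)[OF A] nondegenerate by (metis bilinear_lzero[OF bilinear])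
  then show ?thesis
    using linear_inj_imp_surj[OF SpD(1)[OF A]] by (simp add: bij_def)
qed

lemma Sp_inv:
  assumes A: "A \<in> Sp \<omega>"
  shows "linear (Hilbert_Choice.inv A)"
    "\<And>x. A (Hilbert_Choice.inv A x) = x" "\<And>x. Hilbert_Choice.inv A (A x) = x"
    "\<And>u v. \<omega> u (A v) = \<omega> (Hilbert_Choice.inv A u) v"
proof -
  show inv: "\<And>x. A (Hilbert_Choice.inv A x) = x" "\<And>x. Hilbert_Choice.inv A (A x) = x"
    using Sp_bij[OF A] by (simp_all add: bij_is_inj bij_is_surj surj_f_inv_f)
  show "linear (Hilbert_Choice.inv A)"
    using inj_linear_imp_inv_linear[OF SpD(1)[OF A] bij_is_inj[OF Sp_bij[OF A]]] .
  show "\<And>u v. \<omega> u (A v) = \<omega> (Hilbert_Choice.inv A u) v"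
    using SpD(2)[OF A] inv by metis
qed

lemma Sp_inv_image:
  assumes A: "A \<in> Sp \<omega>" and "A ` L = L" shows "Hilbert_Choice.inv A ` L = L"
proof -
  have "Hilbert_Choice.inv A ` A ` L = L"
    using Sp_inv(3)[OF A] by (simp add: image_comp)
  then show ?thesis using assms(2) by simp
qed

lemma sp_act_apply: "sp_act A J v = A (J (Hilbert_Choice.inv A v))"
  unfolding sp_act_def by simp

lemma sp_act_XSp:
  assumes A: "A \<in> Sp \<omega>" and J: "J \<in> XSp \<omega>"
  shows "sp_act A J \<in> XSp \<omega>"
  unfolding XSp_def
proof (intro CollectI conjI allI impI)
  show "linear (sp_act A J)"
    unfolding sp_act_def using SpD(1)[OF A] Sp_inv(1)[OF A] XSpD(1)[OF J]
    by (intro linear_compose)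
next
  fix u v :: 'v
  show "sp_act A J (sp_act A J v) = - v"
    unfolding sp_act_apply using Sp_inv(2,3)[OF A] XSpD(2)[OF J] linear_neg[OF SpD(1)[OF A]]
    by simp
  show "\<omega> u (sp_act A J v) = \<omega> v (sp_act A J u)"
    unfolding sp_act_apply Sp_inv(4)[OF A] using XSpD(3)[OF J] by simp
next
  fix v :: 'v assume "v \<noteq> 0"
  then have "Hilbert_Choice.inv A v \<noteq> 0"
    using Sp_inv(2)[OF A, of v] linear_0[OF SpD(1)[OF A]] by auto
  then show "\<omega> v (sp_act A J v) > 0"
    unfolding sp_act_apply Sp_inv(4)[OF A] using XSpD(4)[OF J] by simp
qed

end

section \<open>Complex structures exchanging two transverse Lagrangians\<close>

locale transverse_lagrangians = symplectic_space \<omega> for \<omega> :: "'v::euclidean_space \<Rightarrow> 'v \<Rightarrow> real" +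
  fixes Lp Lm :: "'v set"
  assumes lagrangian_Lp: "lagrangian \<omega> Lp" and lagrangian_Lm: "lagrangian \<omega> Lm"
    and transverse_Lp_Lm: "transverse Lp Lm"
begin

lemma subspace_Lp: "subspace Lp" and subspace_Lm: "subspace Lm"
  and isotropic_Lp: "u \<in> Lp \<Longrightarrow> u' \<in> Lp \<Longrightarrow> \<omega> u u' = 0"
  and isotropic_Lm: "w \<in> Lm \<Longrightarrow> w' \<in> Lm \<Longrightarrow> \<omega> w w' = 0"
  and dim_Lp: "2 * dim Lp = DIM('v)" and dim_Lm: "2 * dim Lm = DIM('v)"
  using lagrangian_Lp lagrangian_Lm unfolding lagrangian_def by blast+

lemma Lp_Int_Lm: "Lp \<inter> Lm = {0}"
  using transverse_Lp_Lm unfolding transverse_def .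

lemma Lp_plus_Lm: "\<exists>u w. u \<in> Lp \<and> w \<in> Lm \<and> v = u + w"
proof -
  let ?S = "{u + w |u w. u \<in> Lp \<and> w \<in> Lm}"
  have "dim ?S = DIM('v)"
    using dim_sums_Int[OF subspace_Lp subspace_Lm] dim_Lp dim_Lm Lp_Int_Lm by simp
  then have "span ?S = UNIV"
    using dim_eq_full by blast
  then have "?S = UNIV"
    using span_eq_iff[THEN iffD2, OF subspace_sums[OF subspace_Lp subspace_Lm]] by simp
  then show ?thesis by blast
qed

lemma Lp_plus_Lm_unique:
  assumes "u \<in> Lp" "w \<in> Lm" "u' \<in> Lp" "w' \<in> Lm" "u + w = u' + w'"
  shows "u = u'"
proof -
  have "u - u' = w' - w" using assms(5) by (simp add: algebra_simps)
  then have "u - u' \<in> Lp \<inter> Lm"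
    using subspace_diff[OF subspace_Lp assms(1,3)] subspace_diff[OF subspace_Lm assms(4,2)] by simp
  then show ?thesis using Lp_Int_Lm by simp
qed

definition proj_Lp :: "'v \<Rightarrow> 'v" where
  "proj_Lp v = (THE u. u \<in> Lp \<and> v - u \<in> Lm)"

definition proj_Lm :: "'v \<Rightarrow> 'v" where
  "proj_Lm v = v - proj_Lp v"

lemma proj_Lp_Lm: "proj_Lp v \<in> Lp" "proj_Lm v \<in> Lm"
proof -
  obtain u w where uw: "u \<in> Lp" "w \<in> Lm" "v = u + w" using Lp_plus_Lm by blast
  have "\<exists>!u. u \<in> Lp \<and> v - u \<in> Lm"
  proof
    show "u \<in> Lp \<and> v - u \<in> Lm" using uw by simp
    show "x = u" if "x \<in> Lp \<and> v - x \<in> Lm" for x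
      using Lp_plus_Lm_unique[of x "v - x" u w] that uw by simp
  qed
  then have "proj_Lp v \<in> Lp \<and> v - proj_Lp v \<in> Lm"
    unfolding proj_Lp_def by (rule theI')
  then show "proj_Lp v \<in> Lp" "proj_Lm v \<in> Lm"
    unfolding proj_Lm_def by auto
qed

lemma proj_Lp_plus_proj_Lm: "proj_Lp v + proj_Lm v = v"
  unfolding proj_Lm_def by simp

lemma proj_eq:
  assumes "u \<in> Lp" "w \<in> Lm"
  shows "proj_Lp (u + w) = u" "proj_Lm (u + w) = w"
proof -
  show *: "proj_Lp (u + w) = u"
    using Lp_plus_Lm_unique[OF proj_Lp_Lm assms] proj_Lp_plus_proj_Lm[of "u + w"] by simp
  show "proj_Lm (u + w) = w"
    unfolding proj_Lm_def * by simp
qed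

lemma linear_proj_Lp: "linear proj_Lp"
proof
  fix a b :: 'v and c :: real
  have "a + b = (proj_Lp a + proj_Lp b) + (proj_Lm a + proj_Lm b)"
    using proj_Lp_plus_proj_Lm[of a] proj_Lp_plus_proj_Lm[of b] by (simp add: algebra_simps)
  then show "proj_Lp (a + b) = proj_Lp a + proj_Lp b"
    using proj_eq(1) proj_Lp_Lm subspace_add[OF subspace_Lp] subspace_add[OF subspace_Lm]
    by metis
  have "c *\<^sub>R a = c *\<^sub>R proj_Lp a + c *\<^sub>R proj_Lm a"
    using proj_Lp_plus_proj_Lm[of a] by (metis scaleR_add_right)
  then show "proj_Lp (c *\<^sub>R a) = c *\<^sub>R proj_Lp a"
    using proj_eq(1) proj_Lp_Lm subspace_scale[OF subspace_Lp] subspace_scale[OF subspace_Lm]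
    by metis
qed

lemma linear_proj_Lm: "linear proj_Lm"
  unfolding proj_Lm_def[abs_def] by (intro linear_compose_sub linear_ident linear_proj_Lp)

lemma YSpD:
  assumes "J \<in> YSp \<omega> Lm Lp"
  shows "J \<in> XSp \<omega>" "\<And>u. u \<in> Lp \<Longrightarrow> J u \<in> Lm" "\<And>w. w \<in> Lm \<Longrightarrow> J w \<in> Lp"
  using assms unfolding YSp_def by auto

lemma Lm_eq_0_if_orthogonal:
  assumes w: "w \<in> Lm" and orth: "\<And>u. u \<in> Lp \<Longrightarrow> \<omega> u w = 0"
  shows "w = 0"
proof (rule nondegenerate)
  fix v
  have "\<omega> v w = \<omega> (proj_Lp v) w + \<omega> (proj_Lm v) w"
    by (metis bilinear_ladd[OF bilinear] proj_Lp_plus_proj_Lm)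
  then show "\<omega> w v = 0"
    using orth[OF proj_Lp_Lm(1)] isotropic_Lm[OF proj_Lp_Lm(2) w] skew[of w v] by simp
qed

lemma YSp_form_split:
  assumes K: "K \<in> YSp \<omega> Lm Lp"
  shows "\<omega> v (K v) = \<omega> (proj_Lp v) (K (proj_Lp v)) + \<omega> (proj_Lm v) (K (proj_Lm v))"
proof -
  have "\<omega> v (K v) = \<omega> (proj_Lp v + proj_Lm v) (K (proj_Lp v) + K (proj_Lm v))"
    using proj_Lp_plus_proj_Lm[of v] linear_add[OF XSpD(1)[OF YSpD(1)[OF K]]] by metis
  then show ?thesis
    using isotropic_Lp[OF proj_Lp_Lm(1) YSpD(3)[OF K proj_Lp_Lm(2)]]
      isotropic_Lm[OF proj_Lp_Lm(2) YSpD(2)[OF K proj_Lp_Lm(1)]] by simp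
qed

definition exchange :: "('v \<Rightarrow> 'v) \<Rightarrow> ('v \<Rightarrow> 'v) \<Rightarrow> 'v \<Rightarrow> 'v" where
  "exchange R S v = R (proj_Lp v) - S (proj_Lm v)"

context
  fixes R S :: "'v \<Rightarrow> 'v"
  assumes linear_R: "linear R" and linear_S: "linear S"
    and R_into_Lm: "\<And>u. u \<in> Lp \<Longrightarrow> R u \<in> Lm" and S_into_Lp: "\<And>w. S w \<in> Lp"
    and S_R: "\<And>u. u \<in> Lp \<Longrightarrow> S (R u) = u" and R_S: "\<And>w. w \<in> Lm \<Longrightarrow> R (S w) = w"
begin

lemma linear_exchange: "linear (exchange R S)"
  unfolding exchange_def[abs_def]
  using linear_compose_sub[OF linear_compose[OF linear_proj_Lp linear_R]
      linear_compose[OF linear_proj_Lm linear_S]]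
  by (simp add: o_def)

lemma exchange_Lp: "u \<in> Lp \<Longrightarrow> exchange R S u = R u"
  using proj_eq[of u 0] linear_0[OF linear_S] subspace_0[OF subspace_Lm]
  unfolding exchange_def by simp

lemma exchange_Lm: "w \<in> Lm \<Longrightarrow> exchange R S w = - S w"
  using proj_eq[of 0 w] linear_0[OF linear_R] subspace_0[OF subspace_Lp]
  unfolding exchange_def by simp

lemma exchange_exchange: "exchange R S (exchange R S v) = - v"
proof -
  have "exchange R S (exchange R S v)
      = exchange R S (R (proj_Lp v)) - exchange R S (S (proj_Lm v))"
    unfolding exchange_def[of R S v] by (rule linear_diff[OF linear_exchange])
  also have "\<dots> = - proj_Lp v - proj_Lm v"
    using exchange_Lm[OF R_into_Lm[OF proj_Lp_Lm(1)]] exchange_Lp[OF S_into_Lp]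
      S_R[OF proj_Lp_Lm(1)] R_S[OF proj_Lp_Lm(2)] by simp
  also have "\<dots> = - (proj_Lp v + proj_Lm v)" by simp
  finally show ?thesis by (simp only: proj_Lp_plus_proj_Lm)
qed

lemma image_exchange: "exchange R S ` Lp = Lm" "exchange R S ` Lm = Lp"
proof -
  have "w \<in> exchange R S ` Lp" if "w \<in> Lm" for w
    using exchange_Lp[OF S_into_Lp] R_S[OF that] S_into_Lp
    by (intro image_eqI[of _ _ "S w"]) simp_all
  then show "exchange R S ` Lp = Lm"
    using exchange_Lp R_into_Lm by auto
  have "u \<in> exchange R S ` Lm" if "u \<in> Lp" for u
  proof
    show "- R u \<in> Lm" by (rule subspace_neg[OF subspace_Lm R_into_Lm[OF that]])
    then show "u = exchange R S (- R u)"
      using exchange_Lm S_R[OF that] linear_neg[OF linear_R] linear_neg[OF linear_S] by simp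
  qed
  then show "exchange R S ` Lm = Lp"
    using exchange_Lm S_into_Lp subspace_neg[OF subspace_Lp] by auto
qed

lemma form_exchange:
  "\<omega> a (exchange R S b) = \<omega> (proj_Lp a) (R (proj_Lp b)) + \<omega> (S (proj_Lm b)) (R (S (proj_Lm a)))"
proof -
  have "\<omega> a (exchange R S b) = \<omega> (proj_Lp a + proj_Lm a) (R (proj_Lp b) - S (proj_Lm b))"
    unfolding exchange_def by (simp add: proj_Lp_plus_proj_Lm)
  also have "\<dots> = \<omega> (proj_Lp a) (R (proj_Lp b)) - \<omega> (proj_Lm a) (S (proj_Lm b))"
    using isotropic_Lp[OF proj_Lp_Lm(1) S_into_Lp]
      isotropic_Lm[OF proj_Lp_Lm(2) R_into_Lm[OF proj_Lp_Lm(1)]]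
    by simp
  also have "\<omega> (proj_Lm a) (S (proj_Lm b)) = - \<omega> (S (proj_Lm b)) (R (S (proj_Lm a)))"
    using R_S[OF proj_Lp_Lm(2), of a] skew by metis
  finally show ?thesis by simp
qed

lemma exchange_in_YSp:
  assumes sym: "\<And>u u'. u \<in> Lp \<Longrightarrow> u' \<in> Lp \<Longrightarrow> \<omega> u (R u') = \<omega> u' (R u)"
    and pos: "\<And>u. u \<in> Lp \<Longrightarrow> u \<noteq> 0 \<Longrightarrow> 0 < \<omega> u (R u)"
  shows "exchange R S \<in> YSp \<omega> Lm Lp"
proof -
  have "\<omega> a (exchange R S b) = \<omega> b (exchange R S a)" for a b
    unfolding form_exchange using sym[OF proj_Lp_Lm(1) proj_Lp_Lm(1), of a b]
      sym[OF S_into_Lp S_into_Lp, of "proj_Lm b" "proj_Lm a"] by simp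
  moreover have "0 < \<omega> v (exchange R S v)" if "v \<noteq> 0" for v
  proof -
    have nonneg: "0 \<le> \<omega> u (R u)" if "u \<in> Lp" for u
      using pos[OF that] linear_0[OF linear_R] by (cases "u = 0") auto
    have "proj_Lp v \<noteq> 0 \<or> S (proj_Lm v) \<noteq> 0"
      using R_S[OF proj_Lp_Lm(2), of v] linear_0[OF linear_R] proj_Lp_plus_proj_Lm[of v] that
      by auto
    then show ?thesis
      unfolding form_exchange using pos[OF proj_Lp_Lm(1)] pos[OF S_into_Lp]
        nonneg[OF proj_Lp_Lm(1)] nonneg[OF S_into_Lp] by (meson add_pos_nonneg add_nonneg_pos)
  qed
  ultimately show ?thesis
    unfolding YSp_def XSp_def using linear_exchange exchange_exchange image_exchange by blast
qed

end

lemma YSp_with_form: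
  assumes X: "linear X"
    and sym: "\<And>u u'. u \<in> Lp \<Longrightarrow> u' \<in> Lp \<Longrightarrow> \<omega> u (X u') = \<omega> u' (X u)"
    and pos: "\<And>u. u \<in> Lp \<Longrightarrow> u \<noteq> 0 \<Longrightarrow> 0 < \<omega> u (X u)"
  shows "\<exists>J\<in>YSp \<omega> Lm Lp. \<forall>u\<in>Lp. \<forall>u'\<in>Lp. \<omega> u (J u') = \<omega> u (X u')"
proof -
  define R where "R v = proj_Lm (X v)" for v
  have R: "linear R"
    unfolding R_def[abs_def] using linear_compose[OF X linear_proj_Lm] by (simp add: o_def)
  have form_R: "\<omega> u (R u') = \<omega> u (X u')" if "u \<in> Lp" for u u'
    using isotropic_Lp[OF that proj_Lp_Lm(1)] proj_Lp_plus_proj_Lm[of "X u'"] unfolding R_def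
    by (metis add_0 bilinear_radd[OF bilinear])
  have "inj_on R Lp"
    unfolding linear_inj_on_iff_eq_0[OF R subspace_Lp]
    using pos form_R[of _ _] by (metis bilinear_rzero[OF bilinear] less_irrefl)
  moreover have "R ` Lp = Lm"
  proof (rule subspace_dim_equal)
    show "subspace (R ` Lp)" by (rule linear_subspace_image[OF R subspace_Lp])
    show "R ` Lp \<subseteq> Lm" unfolding R_def using proj_Lp_Lm(2) by blast
    have "dim (R ` Lp) = dim Lp"
      using dim_image_eq[OF R, of Lp] \<open>inj_on R Lp\<close> subspace_Lp span_eq_iff by metis
    then show "dim Lm \<le> dim (R ` Lp)" using dim_Lp dim_Lm by simp
  qed (rule subspace_Lm)
  moreover obtain S where S: "range S \<subseteq> Lp" "linear S" "\<And>u. u \<in> Lp \<Longrightarrow> S (R u) = u"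
    using linear_exists_left_inverse_on[OF R subspace_Lp \<open>inj_on R Lp\<close>] by blast
  have R_S: "R (S w) = w" if "w \<in> Lm" for w
    using S(3) \<open>R ` Lp = Lm\<close> that by force
  have R_into_Lm: "R u \<in> Lm" if "u \<in> Lp" for u
    using \<open>R ` Lp = Lm\<close> that by blast
  have S_into_Lp: "S w \<in> Lp" for w
    using S(1) by blast
  note exchange_props = exchange_in_YSp[OF R S(2) R_into_Lm S_into_Lp S(3) R_S]
    exchange_Lp[OF R S(2) R_into_Lm S_into_Lp S(3) R_S]
  have "exchange R S \<in> YSp \<omega> Lm Lp"
    using sym pos form_R by (intro exchange_props(1)) simp_all
  then show ?thesis
    using form_R exchange_props(2) by (intro bexI[of _ "exchange R S"]) auto
qed

lemma YSp_eq_if_form_eq: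
  assumes K1: "K1 \<in> YSp \<omega> Lm Lp" and K2: "K2 \<in> YSp \<omega> Lm Lp"
    and eq: "\<And>u u'. u \<in> Lp \<Longrightarrow> u' \<in> Lp \<Longrightarrow> \<omega> u (K1 u') = \<omega> u (K2 u')"
  shows "K1 = K2"
proof
  note X1 = YSpD(1)[OF K1] and X2 = YSpD(1)[OF K2]
  have on_Lp: "K1 u = K2 u" if u: "u \<in> Lp" for u
    using Lm_eq_0_if_orthogonal[OF subspace_diff[OF subspace_Lm YSpD(2)[OF K1 u] YSpD(2)[OF K2 u]]]
      eq[OF _ u] by simp
  have on_Lm: "K1 w = K2 w" if w: "w \<in> Lm" for w
  proof -
    have "- K1 w \<in> Lp" "K1 (- K1 w) = w"
      using subspace_neg[OF subspace_Lp YSpD(3)[OF K1 w]] linear_neg[OF XSpD(1)[OF X1]]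
        XSpD(2)[OF X1]
      by simp_all
    then have "K2 w = K2 (K2 (- K1 w))" using on_Lp by metis
    then show ?thesis using XSpD(2)[OF X2] by simp
  qed
  fix v
  show "K1 v = K2 v"
    using on_Lp[OF proj_Lp_Lm(1)] on_Lm[OF proj_Lp_Lm(2)] proj_Lp_plus_proj_Lm[of v]
      linear_add[OF XSpD(1)[OF X1]] linear_add[OF XSpD(1)[OF X2]] by metis
qed

definition Yproj :: "('v \<Rightarrow> 'v) \<Rightarrow> 'v \<Rightarrow> 'v" where
  "Yproj J = (THE K. K \<in> YSp \<omega> Lm Lp \<and> (\<forall>u\<in>Lp. \<forall>u'\<in>Lp. \<omega> u (K u') = \<omega> u (J u')))"

lemma Yproj:
  assumes J: "J \<in> XSp \<omega>"
  shows "Yproj J \<in> YSp \<omega> Lm Lp" "\<And>u u'. u \<in> Lp \<Longrightarrow> u' \<in> Lp \<Longrightarrow> \<omega> u (Yproj J u') = \<omega> u (J u')"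
proof -
  have "\<exists>!K. K \<in> YSp \<omega> Lm Lp \<and> (\<forall>u\<in>Lp. \<forall>u'\<in>Lp. \<omega> u (K u') = \<omega> u (J u'))"
    using YSp_with_form[OF XSpD(1,3,4)[OF J]] YSp_eq_if_form_eq by metis
  then have "Yproj J \<in> YSp \<omega> Lm Lp \<and> (\<forall>u\<in>Lp. \<forall>u'\<in>Lp. \<omega> u (Yproj J u') = \<omega> u (J u'))"
    unfolding Yproj_def by (rule theI')
  then show "Yproj J \<in> YSp \<omega> Lm Lp" "\<And>u u'. u \<in> Lp \<Longrightarrow> u' \<in> Lp \<Longrightarrow> \<omega> u (Yproj J u') = \<omega> u (J u')"
    by auto
qed

text \<open>For \<open>K \<in> YSp\<close> the \<open>K\<close>-norm on \<open>Lm\<close> is dual, via \<open>\<omega>\<close>, to the one on \<open>Lp\<close>; so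
  comparing two such norms on \<open>Lp\<close> in both directions compares them on \<open>Lm\<close>, hence
  everywhere since \<open>Lp\<close> and \<open>Lm\<close> are \<open>K\<close>-orthogonal.\<close>

lemma YSp_Jnorm_le:
  assumes K1: "K1 \<in> YSp \<omega> Lm Lp" and K2: "K2 \<in> YSp \<omega> Lm Lp" and M: "0 \<le> M"
    and le21: "\<And>u. u \<in> Lp \<Longrightarrow> Jnorm \<omega> K2 u \<le> M * Jnorm \<omega> K1 u"
    and le12: "\<And>u. u \<in> Lp \<Longrightarrow> Jnorm \<omega> K1 u \<le> M * Jnorm \<omega> K2 u"
  shows "Jnorm \<omega> K2 v \<le> M * Jnorm \<omega> K1 v"
proof -
  note X1 = YSpD(1)[OF K1] and X2 = YSpD(1)[OF K2]
  have on_Lm: "Jnorm \<omega> K2 w \<le> M * Jnorm \<omega> K1 w" if w: "w \<in> Lm" for w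
  proof -
    define u where "u = - K2 w"
    have u: "u \<in> Lp" "K2 u = w" "Jnorm \<omega> K2 u = Jnorm \<omega> K2 w"
      unfolding u_def using subspace_neg[OF subspace_Lp YSpD(3)[OF K2 w]] XSpD(1,2)[OF X2]
        Jnorm_minus[OF X2] Jnorm_J[OF X2] by (simp_all add: linear_neg)
    have "(Jnorm \<omega> K2 w)\<^sup>2 = \<omega> u w"
      using Jnorm_square[OF X2, of u] u by simp
    also have "\<dots> \<le> Jnorm \<omega> K1 u * Jnorm \<omega> K1 w"
      using abs_form_le_Jnorm[OF X1, of u w] by linarith
    also have "\<dots> \<le> M * Jnorm \<omega> K2 w * Jnorm \<omega> K1 w"
      using le12[OF u(1)] u(3) Jnorm_nonneg[OF X1, of w] by (simp add: mult_right_mono)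
    finally have "(Jnorm \<omega> K2 w)\<^sup>2 \<le> Jnorm \<omega> K2 w * (M * Jnorm \<omega> K1 w)"
      by (simp only: ac_simps)
    moreover have "0 \<le> M * Jnorm \<omega> K1 w" using M Jnorm_nonneg[OF X1, of w] by simp
    ultimately show ?thesis
      using le_of_square_le_mult[OF Jnorm_nonneg[OF X2]] by blast
  qed
  have "(Jnorm \<omega> K2 v)\<^sup>2 = (Jnorm \<omega> K2 (proj_Lp v))\<^sup>2 + (Jnorm \<omega> K2 (proj_Lm v))\<^sup>2"
    using YSp_form_split[OF K2, of v] by (simp add: Jnorm_square[OF X2])
  also have "\<dots> \<le> (M * Jnorm \<omega> K1 (proj_Lp v))\<^sup>2 + (M * Jnorm \<omega> K1 (proj_Lm v))\<^sup>2"
    using le21[OF proj_Lp_Lm(1)] on_Lm[OF proj_Lp_Lm(2)] Jnorm_nonneg[OF X2]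
    by (intro add_mono power_mono) auto
  also have "\<dots> = (M * Jnorm \<omega> K1 v)\<^sup>2"
    using YSp_form_split[OF K1, of v]
    by (simp add: Jnorm_square[OF X1] power_mult_distrib distrib_left[symmetric])
  finally show ?thesis
    using M Jnorm_nonneg[OF X1, of v] by (metis power2_le_imp_le mult_nonneg_nonneg)
qed

lemma dSp_Yproj_le:
  assumes J1: "J1 \<in> XSp \<omega>" and J2: "J2 \<in> XSp \<omega>"
  shows "dSp \<omega> (Yproj J1) (Yproj J2) \<le> dSp \<omega> J1 J2"
proof -
  define M where "M = id_opnorm \<omega> J1 J2"
  have Yproj_Jnorm: "Jnorm \<omega> (Yproj J) u = Jnorm \<omega> J u" if "J \<in> XSp \<omega>" "u \<in> Lp" for J u
    unfolding Jnorm_def using Yproj(2)[OF that(1) that(2) that(2)] by simp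
  have "0 \<le> M" using id_opnorm_ge_1[OF J1 J2] unfolding M_def by simp
  moreover have "Jnorm \<omega> (Yproj J2) u \<le> M * Jnorm \<omega> (Yproj J1) u"
    "Jnorm \<omega> (Yproj J1) u \<le> M * Jnorm \<omega> (Yproj J2) u" if "u \<in> Lp" for u
    using Jnorm_le_id_opnorm[OF J1 J2] Jnorm_le_id_opnorm[OF J2 J1] id_opnorm_commute[OF J1 J2]
    unfolding M_def Yproj_Jnorm[OF J1 that] Yproj_Jnorm[OF J2 that] by simp_all
  ultimately have "Jnorm \<omega> (Yproj J2) v \<le> M * Jnorm \<omega> (Yproj J1) v" for v
    using YSp_Jnorm_le[OF Yproj(1)[OF J1] Yproj(1)[OF J2]] by blast
  then have "dSp \<omega> (Yproj J1) (Yproj J2) \<le> 2 * ln M"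
    using YSpD(1)[OF Yproj(1)] J1 J2 by (intro dSp_le) auto
  then show ?thesis
    unfolding M_def dSp_eq[OF J1 J2] .
qed

lemma sp_act_YSp:
  assumes A: "A \<in> Sp \<omega>" and Ap: "A ` Lp = Lp" and Am: "A ` Lm = Lm" and J: "J \<in> YSp \<omega> Lm Lp"
  shows "sp_act A J \<in> YSp \<omega> Lm Lp"
proof -
  have "sp_act A J ` L = A ` J ` Hilbert_Choice.inv A ` L" for L
    unfolding sp_act_def by (simp add: image_comp)
  then have "sp_act A J ` Lp = Lm" "sp_act A J ` Lm = Lp"
    using J Ap Am Sp_inv_image[OF A Ap] Sp_inv_image[OF A Am] unfolding YSp_def by simp_all
  then show ?thesis
    using sp_act_XSp[OF A YSpD(1)[OF J]] unfolding YSp_def by simp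
qed

lemma Yproj_sp_act:
  assumes A: "A \<in> Sp \<omega>" and Ap: "A ` Lp = Lp" and Am: "A ` Lm = Lm" and J: "J \<in> XSp \<omega>"
  shows "Yproj (sp_act A J) = sp_act A (Yproj J)"
proof (rule YSp_eq_if_form_eq)
  show "Yproj (sp_act A J) \<in> YSp \<omega> Lm Lp" by (rule Yproj(1)[OF sp_act_XSp[OF A J]])
  show "sp_act A (Yproj J) \<in> YSp \<omega> Lm Lp" by (rule sp_act_YSp[OF A Ap Am Yproj(1)[OF J]])
  fix u u' assume u: "u \<in> Lp" and u': "u' \<in> Lp"
  have "Hilbert_Choice.inv A u \<in> Lp" "Hilbert_Choice.inv A u' \<in> Lp"
    using u u' Sp_inv_image[OF A Ap] by blast+
  then show "\<omega> u (Yproj (sp_act A J) u') = \<omega> u (sp_act A (Yproj J) u')"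
    unfolding Yproj(2)[OF sp_act_XSp[OF A J] u u'] sp_act_apply Sp_inv(4)[OF A]
    by (simp add: Yproj(2)[OF J])
qed

lemma YSp_nonempty: "YSp \<omega> Lm Lp \<noteq> {}"
proof -
  define Om where "Om v = (\<Sum>b\<in>Basis. \<omega> b v *\<^sub>R b)" for v
  have Om: "\<omega> u v = u \<bullet> Om v" for u v
  proof -
    have "\<omega> u v = (\<Sum>b\<in>Basis. (u \<bullet> b) * \<omega> b v)"
      using bilinear linear_sum[of "\<lambda>x. \<omega> x v" "\<lambda>b. (u \<bullet> b) *\<^sub>R b" Basis]
      unfolding bilinear_def by (simp add: euclidean_representation)
    then show ?thesis unfolding Om_def by (simp add: inner_sum_right mult.commute)
  qed
  have "linear Om"
    by (rule linearI) (simp_all add: Om_def scaleR_add_left sum.distrib scaleR_sum_right)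
  then have "linear (\<lambda>v. - Om v)" by (rule linear_compose_neg)
  moreover have "\<omega> u (- Om u') = Om u' \<bullet> Om u" for u u'
    using Om[of u "- Om u'"] Om[of "Om u'" u] skew[of u "Om u'"] by (simp add: inner_commute)
  moreover have "Om u \<noteq> 0" if "u \<noteq> 0" for u
  proof
    assume "Om u = 0"
    then have "\<omega> u v = 0" for v using Om[of v u] skew[of u v] by simp
    then show False using nondegenerate that by blast
  qed
  ultimately have "\<exists>J\<in>YSp \<omega> Lm Lp. \<forall>u\<in>Lp. \<forall>u'\<in>Lp. \<omega> u (J u') = \<omega> u (- Om u')"
    by (intro YSp_with_form) (auto simp: inner_commute)
  then show ?thesis by blast
qed

theorem translength_eq_INF_YSp:
  assumes A: "A \<in> Sp \<omega>" and Ap: "A ` Lp = Lp" and Am: "A ` Lm = Lm"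
  shows "translength \<omega> A = (INF J\<in>YSp \<omega> Lm Lp. dSp \<omega> J (sp_act A J))"
proof -
  let ?f = "\<lambda>J. dSp \<omega> J (sp_act A J)"
  have YX: "YSp \<omega> Lm Lp \<subseteq> XSp \<omega>" unfolding YSp_def by blast
  have bdd: "bdd_below (?f ` S)" for S
    unfolding dSp_def by (intro bdd_belowI2[of _ 0]) simp
  have le: "(INF J\<in>YSp \<omega> Lm Lp. ?f J) \<le> ?f J" if J: "J \<in> XSp \<omega>" for J
  proof -
    have "(INF J\<in>YSp \<omega> Lm Lp. ?f J) \<le> ?f (Yproj J)"
      by (rule cINF_lower[OF bdd Yproj(1)[OF J]])
    also have "\<dots> = dSp \<omega> (Yproj J) (Yproj (sp_act A J))"
      unfolding Yproj_sp_act[OF A Ap Am J] ..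
    also have "\<dots> \<le> ?f J" by (rule dSp_Yproj_le[OF J sp_act_XSp[OF A J]])
    finally show ?thesis .
  qed
  have "XSp \<omega> \<noteq> {}" using YSp_nonempty YX by blast
  then have "(INF J\<in>YSp \<omega> Lm Lp. ?f J) \<le> (INF J\<in>XSp \<omega>. ?f J)"
    using le by (rule cINF_greatest)
  moreover have "(INF J\<in>XSp \<omega>. ?f J) \<le> (INF J\<in>YSp \<omega> Lm Lp. ?f J)"
    by (rule cINF_superset_mono[OF YSp_nonempty bdd YX]) simp
  ultimately show ?thesis
    unfolding translength_def by simp
qed

end

section \<open>Moebius transformations of the disc\<close>

lemma mob_det_cnj:
  assumes "(cmod a)\<^sup>2 - (cmod b)\<^sup>2 = 1" shows "a * cnj a - b * cnj b = 1"
proof -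
  have "complex_of_real ((cmod a)\<^sup>2 - (cmod b)\<^sup>2) = 1" using assms by simp
  then show ?thesis by (simp only: of_real_diff complex_norm_square)
qed

lemma mob_norm_less:
  assumes "(cmod a)\<^sup>2 - (cmod b)\<^sup>2 = 1" shows "cmod b < cmod a"
proof -
  have "(cmod b)\<^sup>2 < (cmod a)\<^sup>2" using assms by simp
  then show ?thesis by (simp add: power_less_imp_less_base)
qed

lemma mob_denom_ge:
  assumes "cmod z \<le> r"
  shows "cmod a - cmod b * r \<le> cmod (cnj b * z + cnj a)"
proof -
  have "cmod (cnj b * z) \<le> cmod b * r" using assms by (simp add: norm_mult mult_left_mono)
  moreover have "cmod (cnj a) - cmod (cnj b * z) \<le> cmod (cnj b * z + cnj a)"
    by (metis add.commute norm_diff_ineq)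
  ultimately show ?thesis by simp
qed

lemma mob_denom_nonzero:
  assumes det: "(cmod a)\<^sup>2 - (cmod b)\<^sup>2 = 1" and z: "cmod z \<le> 1"
  shows "cnj b * z + cnj a \<noteq> 0"
  using mob_denom_ge[OF z, of a b] mob_norm_less[OF det] by auto

lemma mob_denom_identity:
  "(cmod (cnj b * z + cnj a))\<^sup>2 - (cmod (a * z + b))\<^sup>2
    = ((cmod a)\<^sup>2 - (cmod b)\<^sup>2) * (1 - (cmod z)\<^sup>2)"
proof -
  have "(cnj b * z + cnj a) * cnj (cnj b * z + cnj a) - (a * z + b) * cnj (a * z + b)
      = (a * cnj a - b * cnj b) * (1 - z * cnj z)"
    by (simp add: algebra_simps)
  then have "complex_of_real ((cmod (cnj b * z + cnj a))\<^sup>2 - (cmod (a * z + b))\<^sup>2)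
      = complex_of_real (((cmod a)\<^sup>2 - (cmod b)\<^sup>2) * (1 - (cmod z)\<^sup>2))"
    unfolding of_real_diff of_real_mult of_real_1 complex_norm_square .
  then show ?thesis using of_real_eq_iff by blast
qed

lemma one_minus_norm_mob:
  assumes det: "(cmod a)\<^sup>2 - (cmod b)\<^sup>2 = 1" and z: "cmod z \<le> 1"
  shows "1 - (cmod (mob a b z))\<^sup>2 = (1 - (cmod z)\<^sup>2) / (cmod (cnj b * z + cnj a))\<^sup>2"
proof -
  let ?D = "cnj b * z + cnj a"
  have "cmod ?D \<noteq> 0" using mob_denom_nonzero[OF det z] by simp
  moreover have "(cmod (mob a b z))\<^sup>2 = (cmod (a * z + b))\<^sup>2 / (cmod ?D)\<^sup>2"
    unfolding mob_def by (simp add: norm_divide power_divide)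
  ultimately show ?thesis
    using mob_denom_identity[of b z a] det by (simp add: field_simps)
qed

lemma norm_mob_le_1:
  assumes det: "(cmod a)\<^sup>2 - (cmod b)\<^sup>2 = 1" and z: "cmod z \<le> 1"
  shows "cmod (mob a b z) \<le> 1"
proof -
  have "0 \<le> (1 - (cmod z)\<^sup>2) / (cmod (cnj b * z + cnj a))\<^sup>2"
    using z by (simp add: abs_square_le_1)
  then have "(cmod (mob a b z))\<^sup>2 \<le> 1" using one_minus_norm_mob[OF det z] by simp
  then show ?thesis by (simp add: abs_square_le_1)
qed

lemma norm_mob_less_1:
  assumes det: "(cmod a)\<^sup>2 - (cmod b)\<^sup>2 = 1" and z: "cmod z < 1"
  shows "cmod (mob a b z) < 1"
proof -
  have "0 < (1 - (cmod z)\<^sup>2) / (cmod (cnj b * z + cnj a))\<^sup>2"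
    using z mob_denom_nonzero[OF det, of z] by (simp add: abs_square_less_1)
  then have "(cmod (mob a b z))\<^sup>2 < 1"
    using one_minus_norm_mob[OF det less_imp_le[OF z]] by simp
  then show ?thesis by (simp add: abs_square_less_1)
qed

lemma mob_diff:
  assumes det: "(cmod a)\<^sup>2 - (cmod b)\<^sup>2 = 1" and z: "cmod z \<le> 1" and w: "cmod w \<le> 1"
  shows "mob a b z - mob a b w = (z - w) / ((cnj b * z + cnj a) * (cnj b * w + cnj a))"
proof -
  have "mob a b z - mob a b w
      = ((a * z + b) * (cnj b * w + cnj a) - (a * w + b) * (cnj b * z + cnj a))
          / ((cnj b * z + cnj a) * (cnj b * w + cnj a))"
    unfolding mob_def using mob_denom_nonzero[OF det z] mob_denom_nonzero[OF det w]
    by (simp add: field_simps)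
  also have "(a * z + b) * (cnj b * w + cnj a) - (a * w + b) * (cnj b * z + cnj a)
      = (a * cnj a - b * cnj b) * (z - w)"
    by (simp add: algebra_simps)
  finally show ?thesis using mob_det_cnj[OF det] by simp
qed

lemma mob_inj:
  assumes "(cmod a)\<^sup>2 - (cmod b)\<^sup>2 = 1" "cmod z \<le> 1" "cmod w \<le> 1" "mob a b z = mob a b w"
  shows "z = w"
  using mob_diff[OF assms(1-3)] assms(4) mob_denom_nonzero[OF assms(1)] assms(2,3) by simp

text \<open>Composition corresponds to the product of the matrices \<open>[[a, b], [cnj b, cnj a]]\<close>.\<close>

lemma mob_mob:
  assumes det: "(cmod c)\<^sup>2 - (cmod d)\<^sup>2 = 1" and z: "cmod z \<le> 1"
  shows "mob a b (mob c d z) = mob (a * c + b * cnj d) (a * d + b * cnj c) z"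
proof -
  let ?D = "cnj d * z + cnj c"
  let ?N = "(a * c + b * cnj d) * z + (a * d + b * cnj c)"
  let ?M = "(cnj b * c + cnj a * cnj d) * z + (cnj b * d + cnj a * cnj c)"
  have D: "?D \<noteq> 0" by (rule mob_denom_nonzero[OF det z])
  have "a * mob c d z + b = ?N / ?D" "cnj b * mob c d z + cnj a = ?M / ?D"
    unfolding mob_def using D by (simp_all add: field_simps)
  then have "mob a b (mob c d z) = (?N / ?D) / (?M / ?D)"
    unfolding mob_def[of a b] by simp
  also have "\<dots> = ?N / ?M" using D by simp
  also have "\<dots> = mob (a * c + b * cnj d) (a * d + b * cnj c) z"
    unfolding mob_def by (simp add: algebra_simps)
  finally show ?thesis .
qed

lemma mob_mob_det:
  assumes "(cmod a)\<^sup>2 - (cmod b)\<^sup>2 = 1" and "(cmod c)\<^sup>2 - (cmod d)\<^sup>2 = 1"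
  shows "(cmod (a * c + b * cnj d))\<^sup>2 - (cmod (a * d + b * cnj c))\<^sup>2 = 1"
proof -
  have "(a * c + b * cnj d) * cnj (a * c + b * cnj d)
      - (a * d + b * cnj c) * cnj (a * d + b * cnj c)
      = (a * cnj a - b * cnj b) * (c * cnj c - d * cnj d)"
    by (simp add: algebra_simps)
  then have "complex_of_real ((cmod (a * c + b * cnj d))\<^sup>2 - (cmod (a * d + b * cnj c))\<^sup>2)
      = complex_of_real (((cmod a)\<^sup>2 - (cmod b)\<^sup>2) * ((cmod c)\<^sup>2 - (cmod d)\<^sup>2))"
    unfolding of_real_diff of_real_mult complex_norm_square .
  then show ?thesis using assms of_real_eq_iff by fastforce
qed

lemma mob_inverse:
  assumes det: "(cmod a)\<^sup>2 - (cmod b)\<^sup>2 = 1" and z: "cmod z \<le> 1"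
  shows "mob a b (mob (cnj a) (- b) z) = z"
proof -
  have "(cmod (cnj a))\<^sup>2 - (cmod (- b))\<^sup>2 = 1" using det by simp
  then have "mob a b (mob (cnj a) (- b) z) = mob (a * cnj a - b * cnj b) 0 z"
    using mob_mob[OF _ z] by simp
  then show ?thesis using mob_det_cnj[OF det] unfolding mob_def by simp
qed

lemma mob_inverse_denom:
  assumes det: "(cmod a)\<^sup>2 - (cmod b)\<^sup>2 = 1" and z: "cmod z \<le> 1"
  shows "(cnj b * mob (cnj a) (- b) z + cnj a) * (cnj (- b) * z + cnj (cnj a)) = 1"
proof -
  have "cnj (- b) * z + cnj (cnj a) \<noteq> 0"
    using mob_denom_nonzero[of "cnj a" "- b" z] det z by simp
  then show ?thesis
    using mob_det_cnj[OF det] unfolding mob_def by (simp add: field_simps)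
qed

lemma is_mobD:
  assumes "is_mob a b f"
  shows "(cmod a)\<^sup>2 - (cmod b)\<^sup>2 = 1" "\<And>z. cmod z \<le> 1 \<Longrightarrow> f z = mob a b z"
  using assms unfolding is_mob_def by auto

text \<open>\<open>hdist z w = sinh\<^sup>2 (d(z, w) / 2)\<close> for the hyperbolic distance \<open>d\<close> of the disc.\<close>

definition hdist :: "complex \<Rightarrow> complex \<Rightarrow> real" where
  "hdist z w = (cmod (z - w))\<^sup>2 / ((1 - (cmod z)\<^sup>2) * (1 - (cmod w)\<^sup>2))"

lemma hdist_mob:
  assumes det: "(cmod a)\<^sup>2 - (cmod b)\<^sup>2 = 1" and z: "cmod z < 1" and w: "cmod w < 1"
  shows "hdist (mob a b z) (mob a b w) = hdist z w"
proof -
  let ?Dz = "cnj b * z + cnj a" and ?Dw = "cnj b * w + cnj a"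
  have D: "cmod ?Dz > 0" "cmod ?Dw > 0" using mob_denom_nonzero[OF det] z w by simp_all
  have "1 - (cmod z)\<^sup>2 > 0" "1 - (cmod w)\<^sup>2 > 0" using z w by (simp_all add: abs_square_less_1)
  moreover have "(cmod (mob a b z - mob a b w))\<^sup>2
      = (cmod (z - w))\<^sup>2 / ((cmod ?Dz)\<^sup>2 * (cmod ?Dw)\<^sup>2)"
    using mob_diff[OF det less_imp_le[OF z] less_imp_le[OF w]]
    by (simp add: norm_divide norm_mult power_divide power_mult_distrib)
  ultimately show ?thesis
    unfolding hdist_def one_minus_norm_mob[OF det less_imp_le[OF z]]
      one_minus_norm_mob[OF det less_imp_le[OF w]] using D by (simp add: field_simps)
qed

lemma norm_diff_square_le_hdist:
  assumes "cmod z < 1" "cmod w < 1"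
  shows "(cmod (z - w))\<^sup>2 \<le> hdist z w"
proof -
  have "0 < 1 - (cmod z)\<^sup>2" "0 < 1 - (cmod w)\<^sup>2"
    using assms by (simp_all add: abs_square_less_1)
  then have "0 < (1 - (cmod z)\<^sup>2) * (1 - (cmod w)\<^sup>2)" "(1 - (cmod z)\<^sup>2) * (1 - (cmod w)\<^sup>2) \<le> 1"
    by (simp_all add: mult_le_one)
  then show ?thesis
    unfolding hdist_def by (simp add: le_divide_eq mult_left_le)
qed

lemma hdist_nonneg:
  assumes "cmod z < 1" "cmod w < 1" shows "0 \<le> hdist z w"
  using norm_diff_square_le_hdist[OF assms] by (rule order_trans[OF zero_le_power2])

text \<open>A Moebius map fixing \<open>p\<close> on the circle with derivative \<open>1/D(p)\<^sup>2\<close> of modulus 1 is parabolic: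
  its fixed-point polynomial has a double root at \<open>p\<close>.\<close>

lemma parabolic_identity:
  assumes p: "cmod p = 1" and det: "(cmod \<alpha>)\<^sup>2 - (cmod \<beta>)\<^sup>2 = 1"
    and D1: "cmod (cnj \<beta> * p + cnj \<alpha>) = 1" and fixed: "mob \<alpha> \<beta> p = p"
  shows "\<alpha> * z + \<beta> - z * (cnj \<beta> * z + cnj \<alpha>) = - cnj \<beta> * (z - p)\<^sup>2"
proof -
  define D where "D = cnj \<beta> * p + cnj \<alpha>"
  have pp: "p * cnj p = 1" using complex_norm_square[of p] p by simp
  have "D \<noteq> 0" using D1 D_def by auto
  then have "\<alpha> * p + \<beta> = p * D" using fixed unfolding mob_def D_def by (simp add: field_simps)
  then have "(\<alpha> * p + \<beta>) * cnj p = p * D * cnj p" by simp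
  then have sa: "\<alpha> = D - \<beta> * cnj p" using pp by (simp add: algebra_simps)
  have sca: "cnj \<alpha> = D - cnj \<beta> * p" unfolding D_def by simp
  have "cnj D = D" using sa unfolding D_def by (simp add: algebra_simps)
  then have DD: "D * D = 1" using complex_norm_square[of D] D1 D_def by simp
  have "(D - \<beta> * cnj p) * (D - cnj \<beta> * p) - \<beta> * cnj \<beta> = 1"
    using mob_det_cnj[OF det] sa sca by simp
  then have "D * D - D * (cnj \<beta> * p + \<beta> * cnj p) + \<beta> * cnj \<beta> * (p * cnj p) - \<beta> * cnj \<beta> = 1"
    by (simp add: algebra_simps)
  then have "D * (cnj \<beta> * p + \<beta> * cnj p) = 0"
    using DD pp by simp
  then have s1: "cnj \<beta> * p + \<beta> * cnj p = 0" using \<open>D \<noteq> 0\<close> by simp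
  have "\<alpha> - cnj \<alpha> - 2 * cnj \<beta> * p = - (cnj \<beta> * p + \<beta> * cnj p)"
    by (subst sa, subst sca) (simp add: algebra_simps)
  then have c1: "\<alpha> - cnj \<alpha> - 2 * cnj \<beta> * p = 0"
    using s1 by simp
  have "(cnj \<beta> * p + \<beta> * cnj p) * p = 0" using s1 by simp
  then have c2: "\<beta> + cnj \<beta> * p\<^sup>2 = 0"
    using pp by (simp add: algebra_simps power2_eq_square)
  have "\<alpha> * z + \<beta> - z * (cnj \<beta> * z + cnj \<alpha>) + cnj \<beta> * (z - p)\<^sup>2
      = (\<alpha> - cnj \<alpha> - 2 * cnj \<beta> * p) * z + (\<beta> + cnj \<beta> * p\<^sup>2)"
    by (simp add: algebra_simps power2_eq_square)
  also have "\<dots> = 0" using c1 c2 by simp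
  finally show ?thesis by (simp add: algebra_simps)
qed

lemma parabolic_hdist:
  assumes det: "(cmod \<alpha>)\<^sup>2 - (cmod \<beta>)\<^sup>2 = 1" and z: "cmod z < 1"
    and parabolic: "\<alpha> * z + \<beta> - z * (cnj \<beta> * z + cnj \<alpha>) = - cnj \<beta> * (z - p)\<^sup>2"
  shows "hdist z (mob \<alpha> \<beta> z) = (cmod \<beta>)\<^sup>2 * (cmod (z - p))^4 / (1 - (cmod z)\<^sup>2)\<^sup>2"
proof -
  let ?D = "cnj \<beta> * z + cnj \<alpha>"
  have D: "?D \<noteq> 0" using mob_denom_nonzero[OF det] z by simp
  have z1: "1 - (cmod z)\<^sup>2 > 0" using z by (simp add: abs_square_less_1)
  have "z - mob \<alpha> \<beta> z = (z * ?D - (\<alpha> * z + \<beta>)) / ?D"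
    unfolding mob_def using D by (simp add: field_simps)
  also have "z * ?D - (\<alpha> * z + \<beta>) = cnj \<beta> * (z - p)\<^sup>2" using parabolic by (simp add: algebra_simps)
  finally have "(cmod (z - mob \<alpha> \<beta> z))\<^sup>2 = (cmod \<beta>)\<^sup>2 * (cmod (z - p))^4 / (cmod ?D)\<^sup>2"
    by (simp add: norm_divide norm_mult norm_power power_divide power_mult_distrib flip: power_mult)
  then have "hdist z (mob \<alpha> \<beta> z) = ((cmod \<beta>)\<^sup>2 * (cmod (z - p))^4 / (cmod ?D)\<^sup>2)
      / ((1 - (cmod z)\<^sup>2) * ((1 - (cmod z)\<^sup>2) / (cmod ?D)\<^sup>2))"
    unfolding hdist_def one_minus_norm_mob[OF det less_imp_le[OF z]] by simp
  also have "\<dots> = (cmod \<beta>)\<^sup>2 * (cmod (z - p))^4 / (1 - (cmod z)\<^sup>2)\<^sup>2"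
    using D z1 by (simp add: field_simps power2_eq_square)
  finally show ?thesis .
qed

lemma parabolic_small_displacement:
  assumes det: "(cmod \<alpha>)\<^sup>2 - (cmod \<beta>)\<^sup>2 = 1" and p: "cmod p = 1"
    and parabolic: "\<And>z. \<alpha> * z + \<beta> - z * (cnj \<beta> * z + cnj \<alpha>) = - cnj \<beta> * (z - p)\<^sup>2"
    and e: "\<epsilon> > 0"
  shows "\<exists>z. cmod z < 1 \<and> hdist z (mob \<alpha> \<beta> z) < \<epsilon>"
proof -
  define B where "B = (cmod \<beta>)\<^sup>2"
  define \<eta> where "\<eta> = min (1/2) (\<epsilon> / (B + 1))"
  have B: "B \<ge> 0" unfolding B_def by simp
  have \<eta>: "0 < \<eta>" "\<eta> \<le> 1/2" unfolding \<eta>_def using e B by (auto simp: min_def)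
  have \<eta>e: "\<eta> * (B + 1) \<le> \<epsilon>" unfolding \<eta>_def using B e
    by (metis min.cobounded2 pos_le_divide_eq add_nonneg_pos zero_less_one)
  define z where "z = complex_of_real (1 - \<eta>) * p"
  have zn: "cmod z = 1 - \<eta>" unfolding z_def using p \<eta> by (simp add: norm_mult del: of_real_diff)
  have zp: "cmod (z - p) = \<eta>"
  proof -
    have "z - p = complex_of_real (- \<eta>) * p" unfolding z_def by (simp add: algebra_simps)
    then show ?thesis using p \<eta> by (simp add: norm_mult)
  qed
  have z: "cmod z < 1" using zn \<eta> by simp
  have den: "\<eta> \<le> 1 - (cmod z)\<^sup>2" unfolding zn using \<eta> by (simp add: power2_eq_square algebra_simps)
  have "hdist z (mob \<alpha> \<beta> z) = B * \<eta>^4 / (1 - (cmod z)\<^sup>2)\<^sup>2"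
    using parabolic_hdist[OF det z parabolic] zp B_def by simp
  also have "\<dots> \<le> B * \<eta>^4 / \<eta>\<^sup>2"
    using den \<eta> B by (intro divide_left_mono mult_nonneg_nonneg power_mono) auto
  also have "\<dots> = B * \<eta>\<^sup>2" using \<eta> by (simp add: power2_eq_square power4_eq_xxxx)
  also have "\<dots> \<le> B * \<eta>" using \<eta> B by (intro mult_left_mono) (auto simp: power2_eq_square)
  also have "\<dots> < \<eta> * (B + 1)" using \<eta> by (simp add: algebra_simps)
  finally show ?thesis using \<eta>e z by (intro exI[of _ z]) auto
qed

lemma one_minus_norm_ge_if_hdist_le_1:
  assumes r: "0 \<le> r" "r < 1" and k: "cmod k \<le> r" and w: "cmod w < 1" and hd: "hdist k w \<le> 1"
  shows "(1 - r)\<^sup>2 / 8 \<le> 1 - cmod w"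
proof (cases "cmod w \<le> (1 + r) / 2")
  case True
  then have "(1 - r) / 2 \<le> 1 - cmod w" by simp
  moreover have "(1 - r) * (1 - r) \<le> 4 * (1 - r)"
    using r by (intro mult_right_mono) auto
  then have "(1 - r)\<^sup>2 / 8 \<le> (1 - r) / 2"
    by (simp add: power2_eq_square)
  ultimately show ?thesis by simp
next
  case False
  have "0 < 1 - (cmod k)\<^sup>2" "1 - (cmod k)\<^sup>2 \<le> 1" "0 < 1 - (cmod w)\<^sup>2"
    using k r w by (simp_all add: abs_square_less_1)
  then have "(cmod (k - w))\<^sup>2 \<le> (1 - (cmod k)\<^sup>2) * (1 - (cmod w)\<^sup>2)"
    using hd unfolding hdist_def by (simp add: divide_le_eq)
  also have "\<dots> \<le> 1 - (cmod w)\<^sup>2"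
    using \<open>1 - (cmod k)\<^sup>2 \<le> 1\<close> \<open>0 < 1 - (cmod w)\<^sup>2\<close> by (simp add: mult_left_le_one_le)
  also have "\<dots> \<le> 2 * (1 - cmod w)"
    using zero_le_power2[of "1 - cmod w"] by (simp add: power2_eq_square algebra_simps)
  finally have "(cmod (k - w))\<^sup>2 \<le> 2 * (1 - cmod w)" .
  moreover have "(1 - r) / 2 < cmod (k - w)"
    using False k norm_triangle_ineq2[of w k] by (simp add: norm_minus_commute)
  then have "((1 - r) / 2)\<^sup>2 < (cmod (k - w))\<^sup>2"
    using r by (intro power_strict_mono) auto
  ultimately show ?thesis by (simp add: power_divide)
qed

lemma mob_coeff_bound:
  assumes det: "(cmod a)\<^sup>2 - (cmod b)\<^sup>2 = 1" and r: "0 \<le> r" "r < 1"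
    and k: "cmod k \<le> r" and hd: "hdist k (mob a b k) \<le> 1"
  shows "cmod a \<le> 3 / (1 - r)\<^sup>2"
proof -
  define s where "s = 1 - r"
  have s: "0 < s" "s \<le> 1" unfolding s_def using r by auto
  have kb: "cmod k \<le> 1" "cmod k < 1" using k r by auto
  let ?D = "cnj b * k + cnj a" and ?w = "mob a b k"
  have w: "cmod ?w < 1" by (rule norm_mob_less_1[OF det kb(2)])
  have w8: "s\<^sup>2 / 8 \<le> 1 - cmod ?w"
    using one_minus_norm_ge_if_hdist_le_1[OF r k w hd] unfolding s_def .
  have B: "0 < 1 - (cmod ?w)\<^sup>2" "1 - cmod ?w \<le> 1 - (cmod ?w)\<^sup>2"
    using w mult_left_le_one_le[of "cmod ?w" "cmod ?w"]
    by (simp_all add: abs_square_less_1 power2_eq_square)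
  have "0 < cmod ?D" using mob_denom_nonzero[OF det kb(1)] by simp
  then have "(cmod ?D)\<^sup>2 = (1 - (cmod k)\<^sup>2) / (1 - (cmod ?w)\<^sup>2)"
    using one_minus_norm_mob[OF det kb(1)] B(1) by (simp add: field_simps)
  also have "\<dots> \<le> 1 / (1 - (cmod ?w)\<^sup>2)"
    using B(1) by (intro divide_right_mono) auto
  also have "\<dots> \<le> 1 / (1 - cmod ?w)"
    using B w by (intro divide_left_mono) auto
  also have "\<dots> \<le> 1 / (s\<^sup>2 / 8)"
    using w8 s w by (intro divide_left_mono) auto
  finally have D: "(cmod ?D)\<^sup>2 \<le> 8 / s\<^sup>2" by simp
  have "cmod a * s \<le> cmod a - cmod b * r"
    using mob_norm_less[OF det] r unfolding s_def by (simp add: algebra_simps mult_left_mono)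
  also have "\<dots> \<le> cmod ?D" by (rule mob_denom_ge[OF k])
  finally have "(cmod a * s)\<^sup>2 \<le> (cmod ?D)\<^sup>2"
    using s by (intro power_mono) auto
  then have "(cmod a * s)\<^sup>2 * s\<^sup>2 \<le> (cmod ?D)\<^sup>2 * s\<^sup>2"
    by (rule mult_right_mono) simp
  also have "\<dots> \<le> 8"
    using D s by (simp add: pos_le_divide_eq)
  finally have "(cmod a * s\<^sup>2)\<^sup>2 \<le> 3\<^sup>2" by (simp add: power2_eq_square ac_simps)
  then have "cmod a * s\<^sup>2 \<le> 3"
    using power2_le_imp_le[of "cmod a * s\<^sup>2" 3] by simp
  then show ?thesis using s unfolding s_def[symmetric] by (simp add: field_simps)
qed

lemma mob_coeffs_bounded_on_compact:
  assumes K: "compact K" "K \<subseteq> ball 0 1"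
  obtains C where "\<And>a b k. (cmod a)\<^sup>2 - (cmod b)\<^sup>2 = 1 \<Longrightarrow> k \<in> K \<Longrightarrow> hdist k (mob a b k) \<le> 1
    \<Longrightarrow> cmod a \<le> C \<and> cmod b \<le> C"
proof -
  obtain r where r: "0 \<le> r" "r < 1" "\<And>k. k \<in> K \<Longrightarrow> cmod k \<le> r"
  proof (cases "K = {}")
    case False
    then obtain k1 where "k1 \<in> K" "\<And>k. k \<in> K \<Longrightarrow> cmod k \<le> cmod k1"
      using continuous_attains_sup[OF K(1) _ continuous_on_norm[OF continuous_on_id]] by blast
    then show ?thesis using that[of "cmod k1"] K(2) by auto
  qed (use that[of 0] in simp)
  show ?thesis
  proof
    fix a b k assume det: "(cmod a)\<^sup>2 - (cmod b)\<^sup>2 = 1" and "k \<in> K" "hdist k (mob a b k) \<le> 1"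
    then have "cmod a \<le> 3 / (1 - r)\<^sup>2"
      using mob_coeff_bound[OF det r(1,2) r(3)] by blast
    then show "cmod a \<le> 3 / (1 - r)\<^sup>2 \<and> cmod b \<le> 3 / (1 - r)\<^sup>2"
      using mob_norm_less[OF det] by linarith
  qed
qed

lemma mob_fixes_limit:
  assumes det: "(cmod a)\<^sup>2 - (cmod b)\<^sup>2 = 1"
    and k: "k \<longlonglongrightarrow> k0" "\<And>n. cmod (k n) < 1" "cmod k0 < 1"
    and hd: "(\<lambda>n. hdist (k n) (mob a b (k n))) \<longlonglongrightarrow> 0"
  shows "mob a b k0 = k0"
proof -
  have "(\<lambda>n. (cmod (k n - mob a b (k n)))\<^sup>2) \<longlonglongrightarrow> 0"
    using norm_diff_square_le_hdist[OF k(2) norm_mob_less_1[OF det k(2)]]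
    by (intro tendsto_sandwich[OF _ _ tendsto_const hd]) auto
  then have "(\<lambda>n. sqrt ((cmod (k n - mob a b (k n)))\<^sup>2)) \<longlonglongrightarrow> sqrt 0"
    by (rule tendsto_real_sqrt)
  then have "(\<lambda>n. k n - mob a b (k n)) \<longlonglongrightarrow> 0"
    by (simp add: tendsto_norm_zero_iff)
  moreover have "(\<lambda>n. k n - mob a b (k n)) \<longlonglongrightarrow> k0 - mob a b k0"
    using mob_denom_nonzero[OF det less_imp_le[OF k(3)]] unfolding mob_def
    by (intro tendsto_intros k(1))
  ultimately show ?thesis
    using LIMSEQ_unique by fastforce
qed

lemma mob_close_to_identity:
  assumes det: "(cmod a)\<^sup>2 - (cmod b)\<^sup>2 = 1" and C: "cmod a \<le> C" "cmod b \<le> C"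
    and a': "cmod (a' - a) \<le> e" and b': "cmod (b' - b) \<le> e"
  shows "cmod (cnj a * a' + (- b) * cnj b' - 1) \<le> 2 * C * e"
    and "cmod (cnj a * b' + (- b) * cnj a') \<le> 2 * C * e"
proof -
  have bound: "cmod (cnj a * x - b * cnj y) \<le> 2 * C * e" if "cmod x \<le> e" "cmod y \<le> e" for x y
  proof -
    have "cmod (cnj a * x - b * cnj y) \<le> cmod a * cmod x + cmod b * cmod y"
      by (metis norm_triangle_ineq4 norm_mult complex_mod_cnj)
    also have "\<dots> \<le> C * e + C * e"
      using C that order_trans[OF norm_ge_zero C(1)] by (intro add_mono mult_mono) auto
    finally show ?thesis by simp
  qed
  have "cnj a * a' + (- b) * cnj b' - 1 = cnj a * (a' - a) - b * cnj (b' - b)"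
    using mob_det_cnj[OF det] by (simp add: algebra_simps)
  then show "cmod (cnj a * a' + (- b) * cnj b' - 1) \<le> 2 * C * e"
    using bound[OF a' b'] by simp
  have "cnj a * b' + (- b) * cnj a' = cnj a * (b' - b) - b * cnj (a' - a)"
    by (simp add: algebra_simps)
  then show "cmod (cnj a * b' + (- b) * cnj a') \<le> 2 * C * e"
    using bound[OF b' a'] by simp
qed

lemma LIMSEQ_not_eventually_receding:
  fixes w :: "nat \<Rightarrow> 'a::metric_space"
  assumes "w \<longlonglongrightarrow> p" and "\<And>k. w k \<noteq> p"
  shows "\<not> eventually (\<lambda>k. dist (w k) p \<le> dist (w (Suc k)) p) sequentially"
proof
  assume "eventually (\<lambda>k. dist (w k) p \<le> dist (w (Suc k)) p) sequentially"
  then obtain N where N: "\<And>k. N \<le> k \<Longrightarrow> dist (w k) p \<le> dist (w (Suc k)) p"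
    unfolding eventually_sequentially by blast
  have "incseq (\<lambda>k. dist (w (k + N)) p)"
    using N by (intro incseq_SucI) (simp add: add.commute)
  moreover have "(\<lambda>k. dist (w (k + N)) p) \<longlonglongrightarrow> 0"
    using assms(1) by (intro tendsto_dist_iff[THEN iffD1] LIMSEQ_ignore_initial_segment)
  ultimately have "dist (w N) p \<le> 0"
    using incseq_le[of _ 0 0] by fastforce
  then show False using assms(2) by simp
qed

text \<open>At a fixed point \<open>p\<close> on the circle the derivative is \<open>1 / D(p)\<^sup>2\<close>; if \<open>|D(p)| < 1\<close>
  orbits near \<open>p\<close> move away from it, so \<open>p\<close> cannot attract an orbit of the disc.\<close>

lemma mob_attracting_denom_ge_1:
  assumes det: "(cmod \<alpha>)\<^sup>2 - (cmod \<beta>)\<^sup>2 = 1" and p: "cmod p = 1" "mob \<alpha> \<beta> p = p"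
    and w: "\<And>k. cmod (w k) < 1" "\<And>k. w (Suc k) = mob \<alpha> \<beta> (w k)" "w \<longlonglongrightarrow> p"
  shows "1 \<le> cmod (cnj \<beta> * p + cnj \<alpha>)"
proof (rule ccontr)
  define D where "D z = cnj \<beta> * z + cnj \<alpha>" for z
  assume "\<not> 1 \<le> cmod (cnj \<beta> * p + cnj \<alpha>)"
  then have "cmod (D p) < 1" unfolding D_def by simp
  then have "cmod (D p) * cmod (D p) < 1"
    using mult_left_le_one_le[of "cmod (D p)" "cmod (D p)"] by simp
  moreover have "(\<lambda>k. cmod (D (w k)) * cmod (D p)) \<longlonglongrightarrow> cmod (D p) * cmod (D p)"
    unfolding D_def by (intro tendsto_intros w(3))
  ultimately have "eventually (\<lambda>k. cmod (D (w k)) * cmod (D p) < 1) sequentially"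
    by (rule order_tendstoD(2)[rotated])
  moreover have "cmod (w k - p) \<le> cmod (w (Suc k) - p)" if "cmod (D (w k)) * cmod (D p) < 1" for k
  proof -
    have wk: "cmod (w k) \<le> 1" using w(1)[of k] by simp
    have "w (Suc k) - p = (w k - p) / (D (w k) * D p)"
      unfolding w(2) D_def using mob_diff[OF det wk, of p] p by simp
    moreover have "0 < cmod (D (w k)) * cmod (D p)"
      using mob_denom_nonzero[OF det wk] mob_denom_nonzero[OF det, of p] p unfolding D_def by simp
    ultimately show ?thesis
      using that by (simp add: norm_divide norm_mult le_divide_eq mult_left_le)
  qed
  ultimately have "eventually (\<lambda>k. dist (w k) p \<le> dist (w (Suc k)) p) sequentially"
    by (auto elim: eventually_mono simp: dist_norm)
  moreover have "w k \<noteq> p" for k using w(1)[of k] p by auto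
  ultimately show False
    using LIMSEQ_not_eventually_receding[OF w(3)] by blast
qed

section \<open>Cocompact Fuchsian groups\<close>

locale cocompact_fuchsian = group G for G :: "('g, 'm) monoid_scheme" (structure) +
  fixes h :: "'g \<Rightarrow> complex \<Rightarrow> complex"
  assumes hyperbolization: "hyperbolization G h"
begin

lemma h_is_mob: "x \<in> carrier G \<Longrightarrow> \<exists>a b. is_mob a b (h x)"
  and h_mult: "x \<in> carrier G \<Longrightarrow> y \<in> carrier G \<Longrightarrow> cmod z \<le> 1 \<Longrightarrow> h (x \<otimes> y) z = h x (h y z)"
  and faithful: "x \<in> carrier G \<Longrightarrow> (\<And>z. cmod z \<le> 1 \<Longrightarrow> h x z = z) \<Longrightarrow> x = \<one>"
  using hyperbolization unfolding hyperbolization_def by auto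

lemma discrete:
  obtains \<epsilon> where "\<epsilon> > 0" "\<And>x \<alpha> \<beta> z. x \<in> carrier G \<Longrightarrow> is_mob \<alpha> \<beta> (h x) \<Longrightarrow> cmod (\<alpha> - 1) < \<epsilon>
    \<Longrightarrow> cmod \<beta> < \<epsilon> \<Longrightarrow> cmod z \<le> 1 \<Longrightarrow> h x z = z"
proof -
  obtain \<epsilon> where "\<epsilon> > 0" and \<epsilon>: "\<forall>x\<in>carrier G. \<forall>\<alpha> \<beta>. is_mob \<alpha> \<beta> (h x) \<and> cmod (\<alpha> - 1) < \<epsilon>
      \<and> cmod \<beta> < \<epsilon> \<longrightarrow> (\<forall>z\<in>cball 0 1. h x z = z)"
    using hyperbolization unfolding hyperbolization_def by blast
  show ?thesis by (rule that[of \<epsilon>]) (use \<open>\<epsilon> > 0\<close> \<epsilon> in auto)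
qed

lemma cocompact:
  obtains K where "compact K" "K \<subseteq> ball 0 1" "\<And>z. cmod z < 1 \<Longrightarrow> \<exists>x\<in>carrier G. \<exists>k\<in>K. z = h x k"
  using hyperbolization unfolding hyperbolization_def by auto

lemma h_norm_le_1: "x \<in> carrier G \<Longrightarrow> cmod z \<le> 1 \<Longrightarrow> cmod (h x z) \<le> 1"
  using h_is_mob is_mobD norm_mob_le_1 by metis

lemma h_norm_less_1: "x \<in> carrier G \<Longrightarrow> cmod z < 1 \<Longrightarrow> cmod (h x z) < 1"
  using h_is_mob is_mobD norm_mob_less_1 less_imp_le by metis

lemma h_funpow_norm_less_1: "x \<in> carrier G \<Longrightarrow> cmod z < 1 \<Longrightarrow> cmod ((h x ^^ n) z) < 1"
  by (induction n) (auto simp: h_norm_less_1)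

lemma h_one:
  assumes z: "cmod z \<le> 1" shows "h \<one> z = z"
proof -
  obtain a b where m: "is_mob a b (h \<one>)" using h_is_mob by blast
  have "mob a b (h \<one> z) = mob a b z"
    using h_mult[OF one_closed one_closed z] is_mobD(2)[OF m] h_norm_le_1[OF one_closed z] z by simp
  then show ?thesis
    using mob_inj[OF is_mobD(1)[OF m] h_norm_le_1[OF one_closed z] z] by simp
qed

lemma h_inv_h: "x \<in> carrier G \<Longrightarrow> cmod z \<le> 1 \<Longrightarrow> h (inv x) (h x z) = z"
  and h_h_inv: "x \<in> carrier G \<Longrightarrow> cmod z \<le> 1 \<Longrightarrow> h x (h (inv x) z) = z"
  using h_mult[of "inv x" x z] h_mult[of x "inv x" z] h_one[of z] by simp_all

lemma h_inv_is_mob: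
  assumes x: "x \<in> carrier G" and m: "is_mob a b (h x)"
  shows "is_mob (cnj a) (- b) (h (inv x))"
  unfolding is_mob_def
proof (intro conjI ballI)
  have det: "(cmod a)\<^sup>2 - (cmod b)\<^sup>2 = 1" by (rule is_mobD(1)[OF m])
  then show det': "(cmod (cnj a))\<^sup>2 - (cmod (- b))\<^sup>2 = 1" by simp
  fix z :: complex assume "z \<in> cball 0 1"
  then have z: "cmod z \<le> 1" by simp
  have w: "cmod (mob (cnj a) (- b) z) \<le> 1" by (rule norm_mob_le_1[OF det' z])
  have "h (inv x) z = h (inv x) (h x (mob (cnj a) (- b) z))"
    using is_mobD(2)[OF m w] mob_inverse[OF det z] by simp
  then show "h (inv x) z = mob (cnj a) (- b) z"
    using h_inv_h[OF x w] by simp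
qed

lemma h_mult_is_mob:
  assumes x: "x \<in> carrier G" and y: "y \<in> carrier G"
    and mx: "is_mob a b (h x)" and my: "is_mob c d (h y)"
  shows "is_mob (a * c + b * cnj d) (a * d + b * cnj c) (h (x \<otimes> y))"
  unfolding is_mob_def
proof (intro conjI ballI)
  show "(cmod (a * c + b * cnj d))\<^sup>2 - (cmod (a * d + b * cnj c))\<^sup>2 = 1"
    by (rule mob_mob_det[OF is_mobD(1)[OF mx] is_mobD(1)[OF my]])
  fix z :: complex assume "z \<in> cball 0 1"
  then have z: "cmod z \<le> 1" by simp
  then show "h (x \<otimes> y) z = mob (a * c + b * cnj d) (a * d + b * cnj c) z"
    using h_mult[OF x y z] is_mobD(2)[OF my z] is_mobD(2)[OF mx] h_norm_le_1[OF y z]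
      mob_mob[OF is_mobD(1)[OF my] z] by simp
qed

lemma attracting_fp_denom_ge_1:
  assumes x: "x \<in> carrier G" and m: "is_mob \<alpha> \<beta> (h x)" and att: "attracting_fp (h x) p"
  shows "1 \<le> cmod (cnj \<beta> * p + cnj \<alpha>)"
proof (rule mob_attracting_denom_ge_1[OF is_mobD(1)[OF m]])
  show p: "cmod p = 1" using att unfolding attracting_fp_def by simp
  then show "mob \<alpha> \<beta> p = p" using att is_mobD(2)[OF m, of p] unfolding attracting_fp_def by simp
  show "cmod ((h x ^^ k) 0) < 1" for k by (rule h_funpow_norm_less_1[OF x]) simp
  then show "(h x ^^ Suc k) 0 = mob \<alpha> \<beta> ((h x ^^ k) 0)" for k
    using is_mobD(2)[OF m less_imp_le] by simp
  show "(\<lambda>k. (h x ^^ k) 0) \<longlonglongrightarrow> p" using att unfolding attracting_fp_def by simp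
qed

lemma attracting_fp_inv_denom_le_1:
  assumes x: "x \<in> carrier G" and m: "is_mob \<alpha> \<beta> (h x)" and p: "cmod p = 1" "h x p = p"
    and att: "attracting_fp (h (inv x)) p"
  shows "cmod (cnj \<beta> * p + cnj \<alpha>) \<le> 1"
proof -
  have det: "(cmod \<alpha>)\<^sup>2 - (cmod \<beta>)\<^sup>2 = 1" by (rule is_mobD(1)[OF m])
  have mi: "is_mob (cnj \<alpha>) (- \<beta>) (h (inv x))" by (rule h_inv_is_mob[OF x m])
  have "mob (cnj \<alpha>) (- \<beta>) p = p"
    using is_mobD(2)[OF mi, of p] h_inv_h[OF x, of p] p by simp
  then have prod: "cmod (cnj \<beta> * p + cnj \<alpha>) * cmod (cnj (- \<beta>) * p + cnj (cnj \<alpha>)) = 1"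
    using mob_inverse_denom[OF det, of p] p by (metis norm_mult norm_one order_refl)
  have ge_1: "1 \<le> cmod (cnj (- \<beta>) * p + cnj (cnj \<alpha>))"
    by (rule attracting_fp_denom_ge_1[OF inv_closed[OF x] mi att])
  show ?thesis
    using mult_left_mono[OF ge_1 norm_ge_zero, of "cnj \<beta> * p + cnj \<alpha>"] prod by linarith
qed

text \<open>The quotients \<open>inv (e N) \<otimes> e n\<close> get arbitrarily close to the identity.\<close>

lemma eventually_const_if_coeffs_converge:
  assumes e: "\<And>n. e n \<in> carrier G" and ab: "\<And>n. is_mob (a n) (b n) (h (e n))"
    and aC: "\<And>n. cmod (a n) \<le> C" and lim: "a \<longlonglongrightarrow> a0" "b \<longlonglongrightarrow> b0"
  obtains N where "\<And>n. N \<le> n \<Longrightarrow> e n = e N"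
proof -
  obtain \<epsilon> where "\<epsilon> > 0" and disc: "\<And>x \<alpha> \<beta> z. x \<in> carrier G \<Longrightarrow> is_mob \<alpha> \<beta> (h x)
      \<Longrightarrow> cmod (\<alpha> - 1) < \<epsilon> \<Longrightarrow> cmod \<beta> < \<epsilon> \<Longrightarrow> cmod z \<le> 1 \<Longrightarrow> h x z = z"
    using discrete by blast
  note det = is_mobD(1)[OF ab]
  have bC: "cmod (b n) \<le> C" for n
    using aC[of n] mob_norm_less[OF det[of n]] by linarith
  have "0 < C" using aC[of 0] mob_norm_less[OF det[of 0]] norm_ge_zero[of "b 0"] by linarith
  define \<eta> where "\<eta> = \<epsilon> / (8 * C)"
  have "\<eta> > 0" "2 * C * (2 * \<eta>) < \<epsilon>"
    unfolding \<eta>_def using \<open>\<epsilon> > 0\<close> \<open>0 < C\<close> by (simp_all add: field_simps)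
  obtain N where N: "\<And>n. N \<le> n \<Longrightarrow> cmod (a n - a0) < \<eta> \<and> cmod (b n - b0) < \<eta>"
    using lim \<open>\<eta> > 0\<close> unfolding LIMSEQ_iff by (metis max.bounded_iff nle_le)
  have "e n = e N" if "N \<le> n" for n
  proof -
    have close: "cmod (a n - a N) \<le> 2 * \<eta>" "cmod (b n - b N) \<le> 2 * \<eta>"
      using N[OF that] N[OF order_refl]
        dist_triangle[of "a n" "a N" a0] dist_triangle[of "b n" "b N" b0]
      by (simp_all add: dist_norm norm_minus_commute)
    define A where "A = cnj (a N) * a n + (- b N) * cnj (b n)"
    define B where "B = cnj (a N) * b n + (- b N) * cnj (a n)"
    have "is_mob A B (h (inv (e N) \<otimes> e n))"
      unfolding A_def B_def by (rule h_mult_is_mob[OF inv_closed[OF e] e h_inv_is_mob[OF e ab] ab])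
    moreover have "cmod (A - 1) < \<epsilon>" "cmod B < \<epsilon>"
      using mob_close_to_identity[OF det aC bC close] \<open>2 * C * (2 * \<eta>) < \<epsilon>\<close>
      unfolding A_def B_def by linarith+
    ultimately have "inv (e N) \<otimes> e n = \<one>"
      using disc e by (intro faithful) auto
    then show ?thesis using inv_solve_left'[of \<one> "e N" "e n"] e by simp
  qed
  then show ?thesis using that by blast
qed

text \<open>Bounded displacement on \<open>K\<close> bounds the coefficients; along a convergent subsequence
  the elements are eventually equal by discreteness, and then fix the limit point of the \<open>k n\<close>.\<close>

lemma fixed_point_if_displacements_tendsto_0:
  assumes K: "compact K" "K \<subseteq> ball 0 1" and e: "\<And>n. e n \<in> carrier G" and k: "\<And>n. k n \<in> K"
    and le_1: "\<And>n. hdist (k n) (h (e n) (k n)) \<le> 1"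
    and lim: "(\<lambda>n. hdist (k n) (h (e n) (k n))) \<longlonglongrightarrow> 0"
  shows "\<exists>n z. cmod z < 1 \<and> h (e n) z = z"
proof -
  have kb: "cmod (k n) < 1" for n using K(2) k[of n] by (auto dest!: subsetD)
  obtain a b where ab: "\<And>n. is_mob (a n) (b n) (h (e n))"
    using h_is_mob[OF e] by metis
  note det = is_mobD(1)[OF ab] and h_mob = is_mobD(2)[OF ab, OF less_imp_le[OF kb]]
  obtain C where C: "\<And>a b k. (cmod a)\<^sup>2 - (cmod b)\<^sup>2 = 1 \<Longrightarrow> k \<in> K \<Longrightarrow> hdist k (mob a b k) \<le> 1
      \<Longrightarrow> cmod a \<le> C \<and> cmod b \<le> C"
    using mob_coeffs_bounded_on_compact[OF K] by blast
  have aC: "cmod (a n) \<le> C" and bC: "cmod (b n) \<le> C" for n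
    using C[OF det[of n] k[of n]] le_1[of n] h_mob[of n n] by simp_all
  have "seq_compact ((cball (0::complex) C \<times> cball (0::complex) C) \<times> K)"
    by (intro compact_imp_seq_compact compact_Times compact_cball K(1))
  moreover have "\<forall>n. ((a n, b n), k n) \<in> (cball 0 C \<times> cball 0 C) \<times> K"
    using aC bC k by simp
  ultimately obtain l \<sigma> where "l \<in> (cball 0 C \<times> cball 0 C) \<times> K" "strict_mono \<sigma>"
    and l: "((\<lambda>n. ((a n, b n), k n)) \<circ> \<sigma>) \<longlonglongrightarrow> l"
    by (rule seq_compactE)
  then have lim_ab: "(\<lambda>n. a (\<sigma> n)) \<longlonglongrightarrow> fst (fst l)" "(\<lambda>n. b (\<sigma> n)) \<longlonglongrightarrow> snd (fst l)"
    and lim_k: "(\<lambda>n. k (\<sigma> n)) \<longlonglongrightarrow> snd l" and l_ball: "cmod (snd l) < 1"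
    using tendsto_fst[OF tendsto_fst[OF l]] tendsto_snd[OF tendsto_fst[OF l]] tendsto_snd[OF l] K(2)
    by (auto simp: o_def dest!: subsetD)
  obtain N where N: "\<And>n. N \<le> n \<Longrightarrow> e (\<sigma> n) = e (\<sigma> N)"
    using eventually_const_if_coeffs_converge[OF e ab aC lim_ab] by blast
  have "(\<lambda>n. hdist (k (\<sigma> n)) (h (e (\<sigma> n)) (k (\<sigma> n)))) \<longlonglongrightarrow> 0"
    using LIMSEQ_subseq_LIMSEQ[OF lim \<open>strict_mono \<sigma>\<close>] by (simp add: o_def)
  moreover have "h (e (\<sigma> n)) (k (\<sigma> n)) = mob (a (\<sigma> N)) (b (\<sigma> N)) (k (\<sigma> n))" if "N \<le> n" for n
    using N[OF that] h_mob[of "\<sigma> N"] by simp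
  then have "eventually (\<lambda>n. hdist (k (\<sigma> n)) (h (e (\<sigma> n)) (k (\<sigma> n)))
      = hdist (k (\<sigma> n)) (mob (a (\<sigma> N)) (b (\<sigma> N)) (k (\<sigma> n)))) sequentially"
    unfolding eventually_sequentially by metis
  ultimately have "(\<lambda>n. hdist (k (\<sigma> n)) (mob (a (\<sigma> N)) (b (\<sigma> N)) (k (\<sigma> n)))) \<longlonglongrightarrow> 0"
    by (rule Lim_transform_eventually)
  then have "mob (a (\<sigma> N)) (b (\<sigma> N)) (snd l) = snd l"
    by (rule mob_fixes_limit[OF det lim_k kb l_ball])
  then show ?thesis
    using is_mobD(2)[OF ab[of "\<sigma> N"]] l_ball by (metis less_imp_le)
qed

lemma hdist_h:
  assumes "x \<in> carrier G" "cmod z < 1" "cmod w < 1"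
  shows "hdist (h x z) (h x w) = hdist z w"
proof -
  obtain a b where m: "is_mob a b (h x)" using h_is_mob[OF assms(1)] by blast
  then show ?thesis
    using is_mobD(2)[OF m] hdist_mob[OF is_mobD(1)[OF m] assms(2,3)] assms(2,3) by simp
qed

lemma hdist_h_conj:
  assumes x: "x \<in> carrier G" and y: "y \<in> carrier G" and k: "cmod k < 1"
  shows "hdist k (h (inv y \<otimes> x \<otimes> y) k) = hdist (h y k) (h x (h y k))"
proof -
  have yk: "cmod (h y k) < 1" by (rule h_norm_less_1[OF y k])
  have "h (inv y \<otimes> x \<otimes> y) k = h (inv y) (h x (h y k))"
    using h_mult[OF m_closed[OF inv_closed[OF y] x] y] h_mult[OF inv_closed[OF y] x]
      h_norm_le_1[OF y] k by simp
  moreover have "k = h (inv y) (h y k)" using h_inv_h[OF y] k by simp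
  ultimately show ?thesis
    using hdist_h[OF inv_closed[OF y] yk h_norm_less_1[OF x yk]] by simp
qed

lemma fixed_point_if_inf_displacement_0:
  assumes x: "x \<in> carrier G" and small: "\<And>\<epsilon>. \<epsilon> > 0 \<Longrightarrow> \<exists>z. cmod z < 1 \<and> hdist z (h x z) < \<epsilon>"
  shows "\<exists>z. cmod z < 1 \<and> h x z = z"
proof -
  obtain K where K: "compact K" "K \<subseteq> ball 0 1"
    and cover: "\<And>z. cmod z < 1 \<Longrightarrow> \<exists>y\<in>carrier G. \<exists>k\<in>K. z = h y k"
    using cocompact by blast
  have "\<exists>z. cmod z < 1 \<and> hdist z (h x z) < 1 / (real n + 1)" for n
    by (rule small) simp
  then obtain z where z: "\<And>n. cmod (z n) < 1" "\<And>n. hdist (z n) (h x (z n)) < 1 / (real n + 1)"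
    by metis
  obtain y k where y: "\<And>n. y n \<in> carrier G" and k: "\<And>n. k n \<in> K" and z_yk: "\<And>n. z n = h (y n) (k n)"
    using cover[OF z(1)] by metis
  have kb: "cmod (k n) < 1" for n using K(2) k[of n] by (auto dest!: subsetD)
  define e where "e n = inv (y n) \<otimes> x \<otimes> y n" for n
  have e: "e n \<in> carrier G" for n unfolding e_def using x y by simp
  have disp: "hdist (k n) (h (e n) (k n)) < 1 / (real n + 1)" for n
    unfolding e_def using hdist_h_conj[OF x y kb] z(2) z_yk by simp
  have lim: "(\<lambda>n. hdist (k n) (h (e n) (k n))) \<longlonglongrightarrow> 0"
  proof (rule Lim_null_comparison)
    show "eventually (\<lambda>n. norm (hdist (k n) (h (e n) (k n))) \<le> 1 / (real n + 1)) sequentially"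
      using disp hdist_nonneg[OF kb h_norm_less_1[OF e kb]]
      by (intro always_eventually allI) (simp add: less_imp_le)
    show "(\<lambda>n. 1 / (real n + 1)) \<longlonglongrightarrow> 0"
      using LIMSEQ_inverse_real_of_nat by (simp add: inverse_eq_divide add.commute)
  qed
  have le_1: "hdist (k n) (h (e n) (k n)) \<le> 1" for n
    using disp[of n] divide_le_eq_1[of 1 "real n + 1"] by linarith
  obtain n w where w: "cmod w < 1" "h (e n) w = w"
    using fixed_point_if_displacements_tendsto_0[where e = e and k = k, OF K e k le_1 lim] by blast
  have "h x (h (y n) w) = h (x \<otimes> y n) w"
    using h_mult[OF x y less_imp_le[OF w(1)]] by simp
  also have "x \<otimes> y n = y n \<otimes> e n"
    unfolding e_def using x y by (simp add: m_assoc[symmetric])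
  also have "h (y n \<otimes> e n) w = h (y n) w"
    using h_mult[OF y e less_imp_le[OF w(1)]] w(2) by simp
  finally show ?thesis using h_norm_less_1[OF y w(1)] by blast
qed

lemma attracting_fixed_points_distinct:
  assumes x: "x \<in> carrier G" and p: "attracting_fp (h x) p" and q: "attracting_fp (h (inv x)) q"
  shows "p \<noteq> q"
proof
  assume "p = q"
  obtain \<alpha> \<beta> where m: "is_mob \<alpha> \<beta> (h x)" using h_is_mob[OF x] by blast
  note det = is_mobD(1)[OF m]
  have p1: "cmod p = 1" and fixed: "h x p = p"
    and attract: "\<And>z. cmod z < 1 \<Longrightarrow> (\<lambda>k. (h x ^^ k) z) \<longlonglongrightarrow> p"
    using p unfolding attracting_fp_def by auto
  have "cmod (cnj \<beta> * p + cnj \<alpha>) = 1"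
    using attracting_fp_denom_ge_1[OF x m p] attracting_fp_inv_denom_le_1[OF x m p1 fixed] q \<open>p = q\<close>
    by simp
  moreover have "mob \<alpha> \<beta> p = p" using fixed is_mobD(2)[OF m, of p] p1 by simp
  ultimately have "\<exists>z. cmod z < 1 \<and> hdist z (mob \<alpha> \<beta> z) < \<epsilon>" if "\<epsilon> > 0" for \<epsilon>
    using parabolic_small_displacement[OF det p1 parabolic_identity[OF p1 det] that] by blast
  moreover have "h x z = mob \<alpha> \<beta> z" if "cmod z < 1" for z
    using is_mobD(2)[OF m less_imp_le[OF that]] .
  ultimately obtain z where z: "cmod z < 1" "h x z = z"
    using fixed_point_if_inf_displacement_0[OF x] by force
  then have "(\<lambda>k. (h x ^^ k) z) = (\<lambda>k. z)"
    by (intro ext, induct_tac k) auto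
  then have "z = p" using attract[OF z(1)] LIMSEQ_const_iff by metis
  then show False using z(1) p1 by simp
qed

end

lemma boundary_map_fixed_lagrangian:
  assumes "boundary_map G h \<omega> \<rho> \<phi>" "x \<in> carrier G" "cmod p = 1" "h x p = p"
  shows "\<rho> x ` \<phi> p = \<phi> p"
  using assms unfolding boundary_map_def by (metis mem_sphere_0)

theorem lemma3p9:
  fixes G :: "'g monoid" and g :: nat and c :: "nat \<Rightarrow> 'g"
    and h :: "'g \<Rightarrow> complex \<Rightarrow> complex"
    and \<omega> :: "'v::euclidean_space \<Rightarrow> 'v \<Rightarrow> real" and n :: nat
    and \<rho> :: "'g \<Rightarrow> 'v \<Rightarrow> 'v" and \<phi> :: "complex \<Rightarrow> 'v set"
    and \<gamma> :: 'g and gp gm :: complex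
  assumes "symplectic_form \<omega>" and "DIM('v) = 2 * n"
    and "g \<ge> 2" and "surface_group G g c"
    and "hyperbolization G h"
    and "maximal_rep G g c \<omega> n \<rho>"
    and "boundary_map G h \<omega> \<rho> \<phi>"
    and "\<gamma> \<in> carrier G" and "\<gamma> \<noteq> \<one>\<^bsub>G\<^esub>"
    and "attracting_fp (h \<gamma>) gp"
    and "attracting_fp (h (inv\<^bsub>G\<^esub> \<gamma>)) gm"
  shows "translength \<omega> (\<rho> \<gamma>) =
         (INF J\<in>YSp \<omega> (\<phi> gm) (\<phi> gp). dSp \<omega> J (sp_act (\<rho> \<gamma>) J))"
proof -
  \<comment> \<open>Maximality enters only through \<open>\<rho>\<close> being a representation into \<open>Sp \<omega>\<close>.\<close>
  note bm = assms(7) and \<gamma> = assms(8) and att_p = assms(10) and att_m = assms(11)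
  have "group G" using assms(4) unfolding surface_group_def by blast
  interpret cocompact_fuchsian G h
    by (rule cocompact_fuchsian.intro[OF \<open>group G\<close>]) (unfold_locales, fact)
  have p: "cmod gp = 1" "h \<gamma> gp = gp" and m: "cmod gm = 1" "h \<gamma> gm = gm"
    using att_p att_m h_h_inv[OF \<gamma>, of gm] unfolding attracting_fp_def by auto
  have "gp \<noteq> gm" by (rule attracting_fixed_points_distinct[OF \<gamma> att_p att_m])
  then have "transverse (\<phi> gp) (\<phi> gm)" "lagrangian \<omega> (\<phi> gp)" "lagrangian \<omega> (\<phi> gm)"
    using bm p(1) m(1) unfolding boundary_map_def by simp_all
  then interpret transverse_lagrangians \<omega> "\<phi> gp" "\<phi> gm"
    using assms(1) by unfold_locales
  have "\<rho> \<gamma> \<in> Sp \<omega>"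
    using assms(6) \<gamma> unfolding maximal_rep_def sp_rep_def by blast
  then show ?thesis
    using translength_eq_INF_YSp boundary_map_fixed_lagrangian[OF bm \<gamma>] p m by blast
qed

end
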